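(* Assume $c\ge c_0>0$ and $-\operatorname{div} b\ge b_0>0$ a.e. in $\Omega$ for constants $c_0,b_0$, let $(u,p)\in H^1_0\times D$ be the exact solution of problem (P1), and let $\tilde u\in H^1_0$. Then for every $\phi\in D$, $$\|u-\tilde u\|_{-\operatorname{div} b}^2 \le \tfrac12\Big(\|f - c\tilde u - b\cdot\nabla\tilde u + \operatorname{div}\phi\|_{c^{-1}}^2 + \|\phi - A\nabla\tilde u\|_{A^{-1}}^2\Big).$$
   Context: $\Omega \subset \mathbb R^d$ ($d\ge1$) is an arbitrary open domain. All function spaces are over $\mathbb C$. $L^2 = L^2(\Omega)$ (scalar or vector valued) has inner product $(x,y) = \int_\Omega x\cdot\bar y$ and norm $\|\cdot\|$. For a real scalar or Hermitian-matrix valued weight $\gamma \in L^\infty(\Omega)$ with $\gamma\ge 0$, $\|v\|_\gamma^2 := (\gamma v, v)$. $H^1 = \{\varphi\in L^2 : \nabla\varphi\in L^2\}$, $D = \{\psi \in L^2(\Omega;\mathbb C^d) : \operatorname{div}\psi \in L^2\}$, and $H^1_0$ is the closure of $C_c^\infty(\Omega)$ in $H^1$. Coefficients: $A \in L^\infty(\Omega;\mathbb C^{d\times d})$ is pointwise Hermitian and satisfies $\alpha\|\varphi\|^2 \le (A\varphi,\varphi) \le \beta\|\varphi\|^2$ for all $\varphi\in L^2(\Omega;\mathbb C^d)$ with constants $0<\alpha\le\beta$; $b\in L^\infty(\Omega;\mathbb R^d)$ is real with distributional divergence $\operatorname{div} b \in L^\infty(\Omega)$; $c\in L^\infty(\Omega)$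 is real valued; $f\in L^2$. Problem (P1): find $(u,p)\in H^1_0\times D$ with $p = A\nabla u$ and $-\operatorname{div} p + b\cdot\nabla u + c\,u = f$ a.e. in $\Omega$. *)

theory Defs
  imports "HOL-Analysis.Analysis"
begin

text \<open>Points of the domain are vectors in real^'n (d = CARD('n) >= 1).\<close>

definition pderiv :: "'n::finite \<Rightarrow> (real^'n \<Rightarrow> real) \<Rightarrow> real^'n \<Rightarrow> real" where
  "pderiv i f x = frechet_derivative f (at x) (axis i 1)"

fun iter_pderiv :: "'n::finite list \<Rightarrow> (real^'n \<Rightarrow> real) \<Rightarrow> real^'n \<Rightarrow> real" where
  "iter_pderiv [] f = f"
| "iter_pderiv (i # is) f = pderiv i (iter_pderiv is f)"

definition smooth :: "(real^'n::finite \<Rightarrow> real) \<Rightarrow> bool" where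
  "smooth f \<longleftrightarrow> (\<forall>is x. iter_pderiv is f differentiable (at x))"

definition test_fun :: "(real^'n::finite) set \<Rightarrow> (real^'n \<Rightarrow> real) \<Rightarrow> bool" where
  "test_fun \<Omega> \<psi> \<longleftrightarrow> smooth \<psi> \<and> compact (closure {x. \<psi> x \<noteq> 0})
      \<and> closure {x. \<psi> x \<noteq> 0} \<subseteq> \<Omega>"

definition L2 :: "(real^'n::finite) set \<Rightarrow> (real^'n \<Rightarrow> complex) \<Rightarrow> bool" where
  "L2 \<Omega> v \<longleftrightarrow> v \<in> borel_measurable (lebesgue_on \<Omega>)
      \<and> integrable (lebesgue_on \<Omega>) (\<lambda>x. (cmod (v x))\<^sup>2)"

definition L2v :: "(real^'n::finite) set \<Rightarrow> (real^'n \<Rightarrow> complex^'n) \<Rightarrow> bool" where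
  "L2v \<Omega> v \<longleftrightarrow> v \<in> borel_measurable (lebesgue_on \<Omega>)
      \<and> integrable (lebesgue_on \<Omega>) (\<lambda>x. (norm (v x))\<^sup>2)"

definition Linf :: "(real^'n::finite) set \<Rightarrow> (real^'n \<Rightarrow> 'b::{real_normed_vector,second_countable_topology}) \<Rightarrow> bool" where
  "Linf \<Omega> v \<longleftrightarrow> v \<in> borel_measurable (lebesgue_on \<Omega>)
      \<and> (\<exists>M. AE x in lebesgue_on \<Omega>. norm (v x) \<le> M)"

definition cdot :: "complex^'n::finite \<Rightarrow> complex^'n \<Rightarrow> complex" where
  "cdot v w = (\<Sum>i\<in>UNIV. v $ i * cnj (w $ i))"

definition weak_partial :: "(real^'n::finite) set \<Rightarrow> (real^'n \<Rightarrow> complex) \<Rightarrow> 'n \<Rightarrow> (real^'n \<Rightarrow> complex) \<Rightarrow> bool" where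
  "weak_partial \<Omega> u i g \<longleftrightarrow> (\<forall>\<psi>. test_fun \<Omega> \<psi> \<longrightarrow>
      (\<integral>x. u x * complex_of_real (pderiv i \<psi> x) \<partial>lebesgue_on \<Omega>)
        = - (\<integral>x. g x * complex_of_real (\<psi> x) \<partial>lebesgue_on \<Omega>))"

text \<open>H^1(Omega) and the weak gradient (well defined up to null sets).\<close>
definition H1 :: "(real^'n::finite) set \<Rightarrow> (real^'n \<Rightarrow> complex) \<Rightarrow> bool" where
  "H1 \<Omega> u \<longleftrightarrow> L2 \<Omega> u \<and> (\<forall>i. \<exists>g. L2 \<Omega> g \<and> weak_partial \<Omega> u i g)"

definition wgrad :: "(real^'n::finite) set \<Rightarrow> (real^'n \<Rightarrow> complex) \<Rightarrow> real^'n \<Rightarrow> complex^'n" where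
  "wgrad \<Omega> u x = (\<chi> i. (SOME g. L2 \<Omega> g \<and> weak_partial \<Omega> u i g) x)"

text \<open>H^1_0(Omega): closure of (complex) C_c^infinity(Omega) in the H^1 norm.
  A complex test function is psi1 + i psi2 with real test functions psi1, psi2.\<close>
definition H10 :: "(real^'n::finite) set \<Rightarrow> (real^'n \<Rightarrow> complex) \<Rightarrow> bool" where
  "H10 \<Omega> u \<longleftrightarrow> H1 \<Omega> u \<and>
     (\<exists>\<psi>1 \<psi>2 :: nat \<Rightarrow> real^'n \<Rightarrow> real. (\<forall>k. test_fun \<Omega> (\<psi>1 k) \<and> test_fun \<Omega> (\<psi>2 k)) \<and>
       (\<lambda>k. (\<integral>x. (cmod (complex_of_real (\<psi>1 k x) + \<i> * complex_of_real (\<psi>2 k x) - u x))\<^sup>2 \<partial>lebesgue_on \<Omega>)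
          + (\<Sum>i\<in>UNIV. \<integral>x. (cmod (complex_of_real (pderiv i (\<psi>1 k) x)
                 + \<i> * complex_of_real (pderiv i (\<psi>2 k) x) - wgrad \<Omega> u x $ i))\<^sup>2 \<partial>lebesgue_on \<Omega>))
       \<longlonglongrightarrow> 0)"

definition weak_div :: "(real^'n::finite) set \<Rightarrow> (real^'n \<Rightarrow> complex^'n) \<Rightarrow> (real^'n \<Rightarrow> complex) \<Rightarrow> bool" where
  "weak_div \<Omega> q w \<longleftrightarrow> (\<forall>\<psi>. test_fun \<Omega> \<psi> \<longrightarrow>
      (\<integral>x. (\<Sum>i\<in>UNIV. q x $ i * complex_of_real (pderiv i \<psi> x)) \<partial>lebesgue_on \<Omega>)
        = - (\<integral>x. w x * complex_of_real (\<psi> x) \<partial>lebesgue_on \<Omega>))"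

text \<open>The space D = H(div) and the weak divergence.\<close>
definition Hdiv :: "(real^'n::finite) set \<Rightarrow> (real^'n \<Rightarrow> complex^'n) \<Rightarrow> bool" where
  "Hdiv \<Omega> q \<longleftrightarrow> L2v \<Omega> q \<and> (\<exists>w. L2 \<Omega> w \<and> weak_div \<Omega> q w)"

definition wdiv :: "(real^'n::finite) set \<Rightarrow> (real^'n \<Rightarrow> complex^'n) \<Rightarrow> real^'n \<Rightarrow> complex" where
  "wdiv \<Omega> q = (SOME w. L2 \<Omega> w \<and> weak_div \<Omega> q w)"

definition cvec :: "real^'n::finite \<Rightarrow> complex^'n" where
  "cvec v = (\<chi> i. complex_of_real (v $ i))"

text \<open>Weighted squared norms ||v||_gamma^2 = (gamma v, v): scalar weight, and matrix weight
  (the latter is real for Hermitian weights; we take its real part).\<close>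
definition wnorm2 :: "(real^'n::finite) set \<Rightarrow> (real^'n \<Rightarrow> real) \<Rightarrow> (real^'n \<Rightarrow> complex) \<Rightarrow> real" where
  "wnorm2 \<Omega> \<gamma> v = (\<integral>x. \<gamma> x * (cmod (v x))\<^sup>2 \<partial>lebesgue_on \<Omega>)"

definition wnorm2M :: "(real^'n::finite) set \<Rightarrow> (real^'n \<Rightarrow> complex^'n^'n) \<Rightarrow> (real^'n \<Rightarrow> complex^'n) \<Rightarrow> real" where
  "wnorm2M \<Omega> G v = Re (\<integral>x. cdot (G x *v v x) (v x) \<partial>lebesgue_on \<Omega>)"

definition solves_P1 :: "(real^'n::finite) set \<Rightarrow> (real^'n \<Rightarrow> complex^'n^'n) \<Rightarrow> (real^'n \<Rightarrow> real^'n)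
   \<Rightarrow> (real^'n \<Rightarrow> real) \<Rightarrow> (real^'n \<Rightarrow> complex) \<Rightarrow> (real^'n \<Rightarrow> complex) \<Rightarrow> (real^'n \<Rightarrow> complex^'n) \<Rightarrow> bool" where
  "solves_P1 \<Omega> A b c f u p \<longleftrightarrow> H10 \<Omega> u \<and> Hdiv \<Omega> p
     \<and> (AE x in lebesgue_on \<Omega>. p x = A x *v wgrad \<Omega> u x)
     \<and> (AE x in lebesgue_on \<Omega>. - wdiv \<Omega> p x + cdot (wgrad \<Omega> u x) (cvec (b x))
            + complex_of_real (c x) * u x = f x)"

end

theory Submission
  imports Defs
begin

text \<open>
  Write e = u - ut and q = \<phi> - p. Integration by parts, checked on test functions and extended
  to H^1_0 by density, gives 2 Re (b.grad e, e) = -(div b e, e) and (div q, e) = -(q, grad e).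
  Hence ||e||^2_{-div b} is twice the real part of the integral of
  (b.grad e + div q) conj e + q.conj (grad e).
  By the equation and p = A grad u the two residuals are, pointwise,
  R1 = c e + (b.grad e + div q) and R2 = q + A grad e, and completing squares (using c > 0 and
  that A is Hermitian and coercive) bounds four times the real part of that integrand by
  |R1|^2 / c + (A^-1 R2, R2). The coercivity of A, assumed only in
  integrated form, first has to be localised to almost every point.
\<close>

section \<open>Square-integrable functions\<close>

definition square_integrable :: "'a measure \<Rightarrow> ('a \<Rightarrow> complex) \<Rightarrow> bool" where
  "square_integrable M f \<longleftrightarrow> f \<in> borel_measurable M \<and> integrable M (\<lambda>x. (cmod (f x))\<^sup>2)"

lemma L2_iff_square_integrable: "L2 \<Omega> f \<longleftrightarrow> square_integrable (lebesgue_on \<Omega>) f"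
  by (simp add: L2_def square_integrable_def)

lemma integrable_mult_of_square_integrable:
  assumes "square_integrable M f" "square_integrable M g"
  shows "integrable M (\<lambda>x. f x * g x)"
proof (rule Bochner_Integration.integrable_bound)
  show "integrable M (\<lambda>x. (cmod (f x))\<^sup>2 + (cmod (g x))\<^sup>2)"
    using assms by (auto simp: square_integrable_def)
  show "AE x in M. norm (f x * g x) \<le> norm ((cmod (f x))\<^sup>2 + (cmod (g x))\<^sup>2)"
  proof (intro AE_I2)
    fix x
    have "cmod (f x) * cmod (g x) \<le> (cmod (f x))\<^sup>2 + (cmod (g x))\<^sup>2"
      using sum_squares_bound[of "cmod (f x)" "cmod (g x)"]
        mult_nonneg_nonneg[OF norm_ge_zero norm_ge_zero, of "f x" "g x"]
      unfolding power2_eq_square by linarith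
    then show "norm (f x * g x) \<le> norm ((cmod (f x))\<^sup>2 + (cmod (g x))\<^sup>2)"
      by (simp add: norm_mult)
  qed
qed (use assms in \<open>auto simp: square_integrable_def\<close>)

lemma norm_add_sq_le:
  fixes a b :: "'a::real_normed_vector"
  shows "(norm (a + b))\<^sup>2 \<le> 2 * (norm a)\<^sup>2 + 2 * (norm b)\<^sup>2"
proof -
  have "(norm (a + b))\<^sup>2 \<le> (norm a + norm b)\<^sup>2"
    by (simp add: norm_triangle_ineq power_mono)
  also have "\<dots> \<le> 2 * (norm a)\<^sup>2 + 2 * (norm b)\<^sup>2"
    using sum_squares_bound[of "norm a" "norm b"] by (simp add: power2_sum)
  finally show ?thesis .
qed

lemma square_integrable_add:
  assumes "square_integrable M f" "square_integrable M g"
  shows "square_integrable M (\<lambda>x. f x + g x)"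
  unfolding square_integrable_def
proof
  show m: "(\<lambda>x. f x + g x) \<in> borel_measurable M"
    using assms by (auto simp: square_integrable_def)
  show "integrable M (\<lambda>x. (cmod (f x + g x))\<^sup>2)"
  proof (rule Bochner_Integration.integrable_bound)
    show "integrable M (\<lambda>x. 2 * (cmod (f x))\<^sup>2 + 2 * (cmod (g x))\<^sup>2)"
      using assms by (auto simp: square_integrable_def)
  qed (use m in \<open>simp_all add: norm_add_sq_le\<close>)
qed

lemma square_integrable_bounded_mult:
  assumes "square_integrable M f" "m \<in> borel_measurable M" "AE x in M. cmod (m x) \<le> B"
  shows "square_integrable M (\<lambda>x. m x * f x)"
  unfolding square_integrable_def
proof
  show m: "(\<lambda>x. m x * f x) \<in> borel_measurable M"
    using assms by (auto simp: square_integrable_def)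
  show "integrable M (\<lambda>x. (cmod (m x * f x))\<^sup>2)"
  proof (rule Bochner_Integration.integrable_bound)
    show "integrable M (\<lambda>x. B\<^sup>2 * (cmod (f x))\<^sup>2)"
      using assms by (auto simp: square_integrable_def)
    show "AE x in M. norm ((cmod (m x * f x))\<^sup>2) \<le> norm (B\<^sup>2 * (cmod (f x))\<^sup>2)"
      using assms(3) by eventually_elim (simp add: norm_mult power_mult_distrib mult_right_mono power_mono)
  qed (use m in simp)
qed

lemma square_integrable_cmult: "square_integrable M f \<Longrightarrow> square_integrable M (\<lambda>x. a * f x)"
  using square_integrable_bounded_mult[of M f "\<lambda>_. a" "cmod a"] by auto

lemma square_integrable_diff:
  "square_integrable M f \<Longrightarrow> square_integrable M g \<Longrightarrow> square_integrable M (\<lambda>x. f x - g x)"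
  using square_integrable_add[of M f "\<lambda>x. (-1) * g x"] square_integrable_cmult[of M g "-1"] by simp

lemma square_integrable_cnj: "square_integrable M f \<Longrightarrow> square_integrable M (\<lambda>x. cnj (f x))"
  by (simp add: square_integrable_def borel_measurable_continuous_on[OF continuous_on_cnj[OF continuous_on_id]])

lemma square_integrable_sum:
  "finite I \<Longrightarrow> (\<And>i. i \<in> I \<Longrightarrow> square_integrable M (f i)) \<Longrightarrow> square_integrable M (\<lambda>x. \<Sum>i\<in>I. f i x)"
  by (induction I rule: finite_induct)
    (auto intro: square_integrable_add simp: square_integrable_def[of M "\<lambda>x. 0"])

lemma integral_norm_mult_le_sqrt:
  assumes "square_integrable M f" "square_integrable M g"
  shows "(\<integral>x. cmod (f x) * cmod (g x) \<partial>M)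
      \<le> sqrt ((\<integral>x. (cmod (f x))\<^sup>2 \<partial>M) * (\<integral>x. (cmod (g x))\<^sup>2 \<partial>M))"
proof (rule real_le_rsqrt)
  have fg: "integrable M (\<lambda>x. cmod (f x) * cmod (g x))"
    using integrable_norm[OF integrable_mult_of_square_integrable[OF assms]] by (simp add: norm_mult)
  have nn: "(\<integral>\<^sup>+x. ennreal (h x) \<partial>M) = ennreal (\<integral>x. h x \<partial>M)"
    if "integrable M h" "\<And>x. 0 \<le> h x" for h :: "_ \<Rightarrow> real"
    using that by (intro nn_integral_eq_integral) auto
  have "ennreal ((\<integral>x. cmod (f x) * cmod (g x) \<partial>M)\<^sup>2)
      = (\<integral>\<^sup>+x. ennreal (cmod (f x)) * ennreal (cmod (g x)) \<partial>M)\<^sup>2"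
    using nn[OF fg] by (simp add: ennreal_power ennreal_mult)
  also have "\<dots> \<le> (\<integral>\<^sup>+x. ennreal (cmod (f x)) ^ 2 \<partial>M) * (\<integral>\<^sup>+x. ennreal (cmod (g x)) ^ 2 \<partial>M)"
    using assms by (intro Cauchy_Schwarz_nn_integral) (auto simp: square_integrable_def)
  also have "\<dots> = ennreal ((\<integral>x. (cmod (f x))\<^sup>2 \<partial>M) * (\<integral>x. (cmod (g x))\<^sup>2 \<partial>M))"
    using assms nn[of "\<lambda>x. (cmod (f x))\<^sup>2"] nn[of "\<lambda>x. (cmod (g x))\<^sup>2"]
    by (simp add: square_integrable_def ennreal_power ennreal_mult)
  finally show "(\<integral>x. cmod (f x) * cmod (g x) \<partial>M)\<^sup>2
      \<le> (\<integral>x. (cmod (f x))\<^sup>2 \<partial>M) * (\<integral>x. (cmod (g x))\<^sup>2 \<partial>M)"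
    by simp
qed

lemma norm_integral_mult_cnj_le_sqrt:
  assumes "square_integrable M f" "square_integrable M g"
  shows "cmod (\<integral>x. f x * cnj (g x) \<partial>M)
      \<le> sqrt ((\<integral>x. (cmod (f x))\<^sup>2 \<partial>M) * (\<integral>x. (cmod (g x))\<^sup>2 \<partial>M))"
  using integral_norm_bound[of M "\<lambda>x. f x * cnj (g x)"] integral_norm_mult_le_sqrt[OF assms]
  by (simp add: norm_mult)

lemma integral_norm_sq_add_le:
  assumes "square_integrable M f" "square_integrable M g"
  shows "(\<integral>x. (cmod (f x + g x))\<^sup>2 \<partial>M)
      \<le> 2 * (\<integral>x. (cmod (f x))\<^sup>2 \<partial>M) + 2 * (\<integral>x. (cmod (g x))\<^sup>2 \<partial>M)"
proof -
  have "(\<integral>x. (cmod (f x + g x))\<^sup>2 \<partial>M) \<le> (\<integral>x. 2 * (cmod (f x))\<^sup>2 + 2 * (cmod (g x))\<^sup>2 \<partial>M)"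
    using assms square_integrable_add[OF assms]
    by (intro integral_mono) (auto simp: square_integrable_def norm_add_sq_le)
  then show ?thesis
    using assms by (simp add: square_integrable_def)
qed

definition L2_tendsto :: "'a measure \<Rightarrow> (nat \<Rightarrow> 'a \<Rightarrow> complex) \<Rightarrow> ('a \<Rightarrow> complex) \<Rightarrow> bool" where
  "L2_tendsto M F f \<longleftrightarrow> (\<lambda>k. \<integral>x. (cmod (F k x - f x))\<^sup>2 \<partial>M) \<longlonglongrightarrow> 0"

lemma L2_tendsto_diff:
  assumes F: "\<And>k. square_integrable M (F k)" "square_integrable M f" "L2_tendsto M F f"
    and G: "\<And>k. square_integrable M (G k)" "square_integrable M g" "L2_tendsto M G g"
  shows "L2_tendsto M (\<lambda>k x. F k x - G k x) (\<lambda>x. f x - g x)"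
  unfolding L2_tendsto_def
proof (rule Lim_null_comparison)
  show "(\<lambda>k. 2 * (\<integral>x. (cmod (F k x - f x))\<^sup>2 \<partial>M) + 2 * (\<integral>x. (cmod (g x - G k x))\<^sup>2 \<partial>M))
      \<longlonglongrightarrow> 0"
    using tendsto_add[OF tendsto_mult_right_zero tendsto_mult_right_zero,
        OF F(3)[unfolded L2_tendsto_def] G(3)[unfolded L2_tendsto_def]]
    by (simp add: norm_minus_commute)
  have "(\<integral>x. (cmod ((F k x - f x) + (g x - G k x)))\<^sup>2 \<partial>M)
      \<le> 2 * (\<integral>x. (cmod (F k x - f x))\<^sup>2 \<partial>M) + 2 * (\<integral>x. (cmod (g x - G k x))\<^sup>2 \<partial>M)" for k
    using F G by (intro integral_norm_sq_add_le square_integrable_diff)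
  then show "\<forall>\<^sub>F k in sequentially. norm (\<integral>x. (cmod (F k x - G k x - (f x - g x)))\<^sup>2 \<partial>M)
      \<le> 2 * (\<integral>x. (cmod (F k x - f x))\<^sup>2 \<partial>M) + 2 * (\<integral>x. (cmod (g x - G k x))\<^sup>2 \<partial>M)"
    by (simp add: algebra_simps)
qed

lemma L2_tendsto_bounded_mult:
  assumes "\<And>k. square_integrable M (F k)" "square_integrable M f" "L2_tendsto M F f"
    and "m \<in> borel_measurable M" "AE x in M. cmod (m x) \<le> B"
  shows "L2_tendsto M (\<lambda>k x. m x * F k x) (\<lambda>x. m x * f x)"
  unfolding L2_tendsto_def
proof (rule Lim_null_comparison)
  have B: "AE x in M. cmod (m x) \<le> max B 0"
    using assms(5) by eventually_elim simp
  show "(\<lambda>k. (max B 0)\<^sup>2 * (\<integral>x. (cmod (F k x - f x))\<^sup>2 \<partial>M)) \<longlonglongrightarrow> 0"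
    using tendsto_mult_right_zero[OF assms(3)[unfolded L2_tendsto_def]] .
  have "(\<integral>x. (cmod (m x * F k x - m x * f x))\<^sup>2 \<partial>M)
      \<le> (\<integral>x. (max B 0)\<^sup>2 * (cmod (F k x - f x))\<^sup>2 \<partial>M)" for k
  proof (rule integral_mono_AE)
    have d: "square_integrable M (\<lambda>x. F k x - f x)"
      using assms(1,2) by (rule square_integrable_diff)
    show "integrable M (\<lambda>x. (cmod (m x * F k x - m x * f x))\<^sup>2)"
      using square_integrable_bounded_mult[OF d assms(4) B]
      by (simp add: square_integrable_def right_diff_distrib)
    show "integrable M (\<lambda>x. (max B 0)\<^sup>2 * (cmod (F k x - f x))\<^sup>2)"
      using d by (simp add: square_integrable_def)
    show "AE x in M. (cmod (m x * F k x - m x * f x))\<^sup>2 \<le> (max B 0)\<^sup>2 * (cmod (F k x - f x))\<^sup>2"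
      using B by eventually_elim
        (simp add: right_diff_distrib[symmetric] norm_mult power_mult_distrib mult_right_mono power_mono)
  qed
  then show "\<forall>\<^sub>F k in sequentially. norm (\<integral>x. (cmod (m x * F k x - m x * f x))\<^sup>2 \<partial>M)
      \<le> (max B 0)\<^sup>2 * (\<integral>x. (cmod (F k x - f x))\<^sup>2 \<partial>M)"
    by simp
qed

lemma norm_integral_mult_cnj_diff_le:
  assumes F: "square_integrable M F" "square_integrable M f"
    and G: "square_integrable M G" "square_integrable M g"
  defines "XF \<equiv> \<integral>x. (cmod (F x - f x))\<^sup>2 \<partial>M" and "XG \<equiv> \<integral>x. (cmod (G x - g x))\<^sup>2 \<partial>M"
  shows "cmod ((\<integral>x. F x * cnj (G x) \<partial>M) - (\<integral>x. f x * cnj (g x) \<partial>M))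
    \<le> sqrt (XF * (2 * XG + 2 * (\<integral>x. (cmod (g x))\<^sup>2 \<partial>M))) + sqrt ((\<integral>x. (cmod (f x))\<^sup>2 \<partial>M) * XG)"
proof -
  have dF: "square_integrable M (\<lambda>x. F x - f x)" and dG: "square_integrable M (\<lambda>x. G x - g x)"
    using F G by (auto intro: square_integrable_diff)
  have "(\<integral>x. F x * cnj (G x) \<partial>M) - (\<integral>x. f x * cnj (g x) \<partial>M)
      = (\<integral>x. (F x - f x) * cnj (G x) + f x * cnj (G x - g x) \<partial>M)"
    using F G
    by (subst Bochner_Integration.integral_diff[symmetric])
      (auto intro!: integrable_mult_of_square_integrable square_integrable_cnj
        Bochner_Integration.integral_cong simp: algebra_simps)
  also have "\<dots> = (\<integral>x. (F x - f x) * cnj (G x) \<partial>M) + (\<integral>x. f x * cnj (G x - g x) \<partial>M)"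
    using F G dF dG
    by (intro Bochner_Integration.integral_add integrable_mult_of_square_integrable square_integrable_cnj)
  finally have split: "(\<integral>x. F x * cnj (G x) \<partial>M) - (\<integral>x. f x * cnj (g x) \<partial>M)
      = (\<integral>x. (F x - f x) * cnj (G x) \<partial>M) + (\<integral>x. f x * cnj (G x - g x) \<partial>M)" .
  have "(\<integral>x. (cmod (G x))\<^sup>2 \<partial>M) \<le> 2 * XG + 2 * (\<integral>x. (cmod (g x))\<^sup>2 \<partial>M)"
    using integral_norm_sq_add_le[OF dG G(2)] by (simp add: XG_def)
  then have "sqrt (XF * (\<integral>x. (cmod (G x))\<^sup>2 \<partial>M)) \<le> sqrt (XF * (2 * XG + 2 * (\<integral>x. (cmod (g x))\<^sup>2 \<partial>M)))"
    by (intro real_sqrt_le_mono mult_left_mono) (simp_all add: XF_def)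
  then have "cmod (\<integral>x. (F x - f x) * cnj (G x) \<partial>M)
      \<le> sqrt (XF * (2 * XG + 2 * (\<integral>x. (cmod (g x))\<^sup>2 \<partial>M)))"
    using norm_integral_mult_cnj_le_sqrt[OF dF G(1)] unfolding XF_def by linarith
  moreover have "cmod (\<integral>x. f x * cnj (G x - g x) \<partial>M) \<le> sqrt ((\<integral>x. (cmod (f x))\<^sup>2 \<partial>M) * XG)"
    using norm_integral_mult_cnj_le_sqrt[OF F(2) dG] by (simp add: XG_def)
  ultimately show ?thesis
    unfolding split by (rule order_trans[OF norm_triangle_ineq add_mono])
qed

lemma tendsto_integral_mult_cnj:
  assumes F: "\<And>k. square_integrable M (F k)" "square_integrable M f" "L2_tendsto M F f"
    and G: "\<And>k. square_integrable M (G k)" "square_integrable M g" "L2_tendsto M G g"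
  shows "(\<lambda>k. \<integral>x. F k x * cnj (G k x) \<partial>M) \<longlonglongrightarrow> (\<integral>x. f x * cnj (g x) \<partial>M)"
proof -
  define XF where "XF k = (\<integral>x. (cmod (F k x - f x))\<^sup>2 \<partial>M)" for k
  define XG where "XG k = (\<integral>x. (cmod (G k x - g x))\<^sup>2 \<partial>M)" for k
  define NF where "NF = (\<integral>x. (cmod (f x))\<^sup>2 \<partial>M)"
  define NG where "NG = (\<integral>x. (cmod (g x))\<^sup>2 \<partial>M)"
  have bound: "cmod ((\<integral>x. F k x * cnj (G k x) \<partial>M) - (\<integral>x. f x * cnj (g x) \<partial>M))
      \<le> sqrt (XF k * (2 * XG k + 2 * NG)) + sqrt (NF * XG k)" for k
    unfolding XF_def XG_def NF_def NG_def using F G by (intro norm_integral_mult_cnj_diff_le)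
  have "(\<lambda>k. sqrt (XF k * (2 * XG k + 2 * NG)) + sqrt (NF * XG k))
      \<longlonglongrightarrow> sqrt (0 * (2 * 0 + 2 * NG)) + sqrt (NF * 0)"
    using F(3) G(3) unfolding L2_tendsto_def XF_def[symmetric] XG_def[symmetric]
    by (intro tendsto_intros)
  then have "(\<lambda>k. sqrt (XF k * (2 * XG k + 2 * NG)) + sqrt (NF * XG k)) \<longlonglongrightarrow> 0"
    by simp
  then have "(\<lambda>k. (\<integral>x. F k x * cnj (G k x) \<partial>M) - (\<integral>x. f x * cnj (g x) \<partial>M)) \<longlonglongrightarrow> 0"
    by (rule Lim_null_comparison[OF always_eventually[OF allI[OF bound]]])
  then show ?thesis
    by (simp add: LIM_zero_iff)
qed

section \<open>Smooth functions and test functions\<close>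

lemma pderiv_add_cmult:
  assumes "f differentiable (at x)" "g differentiable (at x)"
  shows "pderiv i (\<lambda>y. f y + a * g y) x = pderiv i f x + a * pderiv i g x"
proof -
  have "((\<lambda>y. f y + a * g y) has_derivative
      (\<lambda>h. frechet_derivative f (at x) h + a * frechet_derivative g (at x) h)) (at x)"
    using assms by (intro has_derivative_add has_derivative_mult_right)
      (simp_all add: frechet_derivative_works[symmetric])
  then show ?thesis
    by (simp add: pderiv_def frechet_derivative_at[symmetric])
qed

lemma pderiv_diff:
  assumes "f differentiable (at x)" "g differentiable (at x)"
  shows "pderiv i (\<lambda>y. f y - g y) x = pderiv i f x - pderiv i g x"
  using pderiv_add_cmult[OF assms, of i "-1"] by simp

lemma pderiv_mult:
  assumes "f differentiable (at x)" "g differentiable (at x)"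
  shows "pderiv i (\<lambda>y. f y * g y) x = f x * pderiv i g x + pderiv i f x * g x"
proof -
  have "((\<lambda>y. f y * g y) has_derivative
      (\<lambda>h. f x * frechet_derivative g (at x) h + frechet_derivative f (at x) h * g x)) (at x)"
    using assms by (intro has_derivative_mult) (simp_all add: frechet_derivative_works[symmetric])
  then show ?thesis
    by (simp add: pderiv_def frechet_derivative_at[symmetric])
qed

lemma pderiv_eq_0_outside_closure_support:
  assumes "x \<notin> closure {y. f y \<noteq> 0}"
  shows "pderiv i f x = 0"
proof -
  have "((\<lambda>y. 0) has_derivative (\<lambda>h. 0)) (at x)"
    by (rule has_derivative_const)
  then have "(f has_derivative (\<lambda>h. 0)) (at x)"
    by (rule has_derivative_transform_within_open[where s = "- closure {y. f y \<noteq> 0}"])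
      (use assms closure_subset[of "{y. f y \<noteq> 0}"] in auto)
  then show ?thesis
    by (simp add: pderiv_def frechet_derivative_at[symmetric])
qed

definition smooth_upto :: "nat \<Rightarrow> (real^'n::finite \<Rightarrow> real) \<Rightarrow> bool" where
  "smooth_upto n f \<longleftrightarrow> (\<forall>is. length is \<le> n \<longrightarrow> (\<forall>x. iter_pderiv is f differentiable (at x)))"

lemma smooth_iff_smooth_upto: "smooth f \<longleftrightarrow> (\<forall>n. smooth_upto n f)"
  unfolding smooth_def smooth_upto_def by auto

lemma smooth_upto_mono: "smooth_upto n f \<Longrightarrow> m \<le> n \<Longrightarrow> smooth_upto m f"
  unfolding smooth_upto_def by auto

lemma iter_pderiv_append_single: "iter_pderiv (is @ [i]) f = iter_pderiv is (pderiv i f)"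
  by (induction "is") auto

lemma smooth_upto_pderiv: "smooth_upto (Suc n) f \<Longrightarrow> smooth_upto n (pderiv i f)"
  unfolding smooth_upto_def
  by (metis iter_pderiv_append_single length_append_singleton Suc_le_mono)

lemma iter_pderiv_add_cmult:
  assumes "smooth_upto n f" "smooth_upto n g" "length is \<le> n"
  shows "iter_pderiv is (\<lambda>x. f x + a * g x) = (\<lambda>x. iter_pderiv is f x + a * iter_pderiv is g x)"
  using assms(3)
proof (induction "is")
  case (Cons i "is")
  then show ?case
    using assms(1,2) by (simp add: smooth_upto_def pderiv_add_cmult)
qed simp

lemma smooth_upto_add_cmult:
  assumes "smooth_upto n f" "smooth_upto n g"
  shows "smooth_upto n (\<lambda>x. f x + a * g x)"
  using assms iter_pderiv_add_cmult[OF assms]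
  by (auto simp: smooth_upto_def intro!: differentiable_add differentiable_mult)

lemma smooth_upto_mult: "smooth_upto n f \<Longrightarrow> smooth_upto n g \<Longrightarrow> smooth_upto n (\<lambda>x. f x * g x)"
proof (induction n arbitrary: f g)
  case 0
  then show ?case
    by (auto simp: smooth_upto_def intro!: differentiable_mult)
next
  case (Suc n)
  have f: "smooth_upto n f" and g: "smooth_upto n g"
    using Suc.prems smooth_upto_mono le_SucI by blast+
  have snoc: "iter_pderiv (js @ [i]) (\<lambda>x. f x * g x) differentiable (at x)"
    if "length js \<le> n" for js i x
  proof -
    have "\<And>x. f differentiable (at x)" "\<And>x. g differentiable (at x)"
      using Suc.prems by (auto simp: smooth_upto_def dest: spec[of _ "[]"])
    then have "pderiv i (\<lambda>x. f x * g x) = (\<lambda>x. f x * pderiv i g x + 1 * (pderiv i f x * g x))"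
      by (simp add: fun_eq_iff pderiv_mult)
    moreover have "smooth_upto n (\<lambda>x. f x * pderiv i g x + 1 * (pderiv i f x * g x))"
      using Suc.IH[OF f smooth_upto_pderiv[OF Suc.prems(2)]]
        Suc.IH[OF smooth_upto_pderiv[OF Suc.prems(1)] g]
      by (intro smooth_upto_add_cmult)
    ultimately show ?thesis
      using that by (simp add: iter_pderiv_append_single smooth_upto_def)
  qed
  have short: "iter_pderiv js (\<lambda>x. f x * g x) differentiable (at x)" if "length js \<le> n" for js x
    using Suc.IH[OF f g] that by (simp add: smooth_upto_def)
  show ?case
    unfolding smooth_upto_def
  proof (intro allI impI)
    fix "is" :: "'a list" and x
    assume "length is \<le> Suc n"
    then consider "length is \<le> n" | js i where "is = js @ [i]" "length js \<le> n"
      by (cases "is" rule: rev_cases) auto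
    then show "iter_pderiv is (\<lambda>x. f x * g x) differentiable (at x)"
      using snoc short by cases auto
  qed
qed

lemma smooth_add_cmult: "smooth f \<Longrightarrow> smooth g \<Longrightarrow> smooth (\<lambda>x. f x + a * g x)"
  by (simp add: smooth_iff_smooth_upto smooth_upto_add_cmult)

lemma smooth_mult: "smooth f \<Longrightarrow> smooth g \<Longrightarrow> smooth (\<lambda>x. f x * g x)"
  by (simp add: smooth_iff_smooth_upto smooth_upto_mult)

lemma smooth_pderiv: "smooth f \<Longrightarrow> smooth (pderiv i f)"
  by (simp add: smooth_iff_smooth_upto smooth_upto_pderiv)

lemma smooth_differentiable: "smooth f \<Longrightarrow> f differentiable (at x)"
  unfolding smooth_def by (metis iter_pderiv.simps(1))

lemma smooth_continuous_on: "smooth f \<Longrightarrow> continuous_on S f"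
  by (intro continuous_at_imp_continuous_on ballI differentiable_imp_continuous_within smooth_differentiable)

lemma test_funI_support:
  assumes "smooth g" "test_fun \<Omega> a" "test_fun \<Omega> b"
    and "{x. g x \<noteq> 0} \<subseteq> closure {x. a x \<noteq> 0} \<union> closure {x. b x \<noteq> 0}"
  shows "test_fun \<Omega> g"
proof -
  have "closure {x. g x \<noteq> 0} \<subseteq> closure {x. a x \<noteq> 0} \<union> closure {x. b x \<noteq> 0}"
    using assms(4) by (simp add: closure_minimal closed_Un)
  moreover have "compact (closure {x. a x \<noteq> 0} \<union> closure {x. b x \<noteq> 0})"
    using assms(2,3) unfolding test_fun_def by (intro compact_Un) auto
  ultimately show ?thesis
    using assms unfolding test_fun_def
    by (meson bounded_subset compact_eq_bounded_closed closed_closure order_trans le_sup_iff)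
qed

lemma test_fun_add_cmult:
  assumes "test_fun \<Omega> a" "test_fun \<Omega> b"
  shows "test_fun \<Omega> (\<lambda>x. a x + c * b x)"
proof (rule test_funI_support[OF _ assms])
  show "smooth (\<lambda>x. a x + c * b x)"
    using assms by (simp add: test_fun_def smooth_add_cmult)
  show "{x. a x + c * b x \<noteq> 0} \<subseteq> closure {x. a x \<noteq> 0} \<union> closure {x. b x \<noteq> 0}"
    using closure_subset[of "{x. a x \<noteq> 0}"] closure_subset[of "{x. b x \<noteq> 0}"] by fastforce
qed

lemma test_fun_diff: "test_fun \<Omega> a \<Longrightarrow> test_fun \<Omega> b \<Longrightarrow> test_fun \<Omega> (\<lambda>x. a x - b x)"
  using test_fun_add_cmult[of \<Omega> a b "-1"] by simp

lemma test_fun_mult: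
  assumes "test_fun \<Omega> a" "test_fun \<Omega> b"
  shows "test_fun \<Omega> (\<lambda>x. a x * b x)"
proof (rule test_funI_support[OF _ assms])
  show "smooth (\<lambda>x. a x * b x)"
    using assms by (simp add: test_fun_def smooth_mult)
  show "{x. a x * b x \<noteq> 0} \<subseteq> closure {x. a x \<noteq> 0} \<union> closure {x. b x \<noteq> 0}"
    using closure_subset[of "{x. a x \<noteq> 0}"] by auto
qed

lemma test_fun_pderiv:
  assumes "test_fun \<Omega> a"
  shows "test_fun \<Omega> (pderiv i a)"
proof (rule test_funI_support[OF _ assms assms])
  show "smooth (pderiv i a)"
    using assms by (simp add: test_fun_def smooth_pderiv)
  show "{x. pderiv i a x \<noteq> 0} \<subseteq> closure {x. a x \<noteq> 0} \<union> closure {x. a x \<noteq> 0}"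
    using pderiv_eq_0_outside_closure_support by auto
qed

lemma sets_lebesgue_open: "open (\<Omega>::(real^'n::finite) set) \<Longrightarrow> \<Omega> \<in> sets lebesgue"
  by (metis borel_open sets_completionI_sets sets_lborel)

lemma integrable_indicator_compact:
  fixes K :: "'a::euclidean_space set"
  assumes "\<Omega> \<in> sets lebesgue" "compact K" "K \<subseteq> \<Omega>"
  shows "integrable (lebesgue_on \<Omega>) (indicator K :: _ \<Rightarrow> real)"
proof -
  have \<Omega>: "\<Omega> \<inter> space lebesgue \<in> sets lebesgue"
    using assms(1) by simp
  have K: "K \<in> lmeasurable"
    by (rule lmeasurable_compact[OF assms(2)])
  then have "K \<in> sets (lebesgue_on \<Omega>)"
    using assms(3) \<Omega> by (simp add: sets_restrict_space_iff fmeasurable_def Int_absorb2)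
  moreover have "emeasure (lebesgue_on \<Omega>) K = emeasure lebesgue K"
    using \<Omega> assms(3) by (rule emeasure_restrict_space)
  moreover have "emeasure lebesgue K < \<infinity>"
    using K unfolding fmeasurable_def by blast
  ultimately show ?thesis
    by simp
qed

lemma test_fun_square_integrable:
  assumes "open \<Omega>" "test_fun \<Omega> a"
  shows "square_integrable (lebesgue_on \<Omega>) (\<lambda>x. complex_of_real (a x))"
  unfolding square_integrable_def
proof
  define K where "K = closure {x. a x \<noteq> 0}"
  have K: "compact K" "K \<subseteq> \<Omega>" and a: "continuous_on UNIV a"
    using assms(2) by (simp_all add: K_def test_fun_def smooth_continuous_on)
  have am: "a \<in> borel_measurable (lebesgue_on \<Omega>)"
    using continuous_imp_measurable_on_sets_lebesgue[OF continuous_on_subset[OF a] sets_lebesgue_open]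
      assms(1) by blast
  then show "(\<lambda>x. complex_of_real (a x)) \<in> borel_measurable (lebesgue_on \<Omega>)"
    by simp
  obtain B where B: "\<And>x. x \<in> K \<Longrightarrow> \<bar>a x\<bar> \<le> B"
    using compact_imp_bounded[OF compact_continuous_image[OF continuous_on_subset[OF a] K(1)]]
    unfolding bounded_iff by auto
  have "integrable (lebesgue_on \<Omega>) (indicator K :: _ \<Rightarrow> real)"
    using sets_lebesgue_open[OF assms(1)] K by (rule integrable_indicator_compact)
  then show "integrable (lebesgue_on \<Omega>) (\<lambda>x. (cmod (complex_of_real (a x)))\<^sup>2)"
  proof (rule Bochner_Integration.integrable_bound[where f = "\<lambda>x. B\<^sup>2 * indicator K x", OF integrable_mult_right])
    show "AE x in lebesgue_on \<Omega>. norm ((cmod (complex_of_real (a x)))\<^sup>2) \<le> norm (B\<^sup>2 * indicator K x)"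
    proof (intro AE_I2)
      fix x
      show "norm ((cmod (complex_of_real (a x)))\<^sup>2) \<le> norm (B\<^sup>2 * indicator K x)"
      proof (cases "x \<in> K")
        case True
        then show ?thesis
          using power_mono[OF B[OF True] abs_ge_zero, of 2] by simp
      next
        case False
        then show ?thesis
          using closure_subset[of "{x. a x \<noteq> 0}"] by (auto simp: K_def)
      qed
    qed
  qed (use am in simp)
qed

section \<open>Bounded multipliers and approximation in \<open>H\<^sup>1\<^sub>0\<close>\<close>

lemma Linf_complex_of_real: "Linf \<Omega> m \<Longrightarrow> Linf \<Omega> (\<lambda>x. complex_of_real (m x))"
  unfolding Linf_def by (auto intro: measurable_compose[OF _ borel_measurable_of_real])

lemma Linf_vec_nth:
  assumes "Linf \<Omega> (b :: real^'n::finite \<Rightarrow> real^'m::finite)"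
  shows "Linf \<Omega> (\<lambda>x. b x $ i)"
proof -
  obtain B where "AE x in lebesgue_on \<Omega>. norm (b x) \<le> B"
    using assms unfolding Linf_def by blast
  then have "AE x in lebesgue_on \<Omega>. norm (b x $ i) \<le> B"
    by eventually_elim (rule order_trans[OF Finite_Cartesian_Product.norm_nth_le])
  moreover have "(\<lambda>x. b x $ i) \<in> borel_measurable (lebesgue_on \<Omega>)"
    using assms unfolding Linf_def
    by (intro borel_measurable_continuous_on[where f = "\<lambda>v. v $ i"] linear_continuous_on
        bounded_linear_vec_nth) auto
  ultimately show ?thesis
    unfolding Linf_def by blast
qed

lemma Linf_square_integrable_mult:
  assumes "Linf \<Omega> m" "square_integrable (lebesgue_on \<Omega>) f"
  shows "square_integrable (lebesgue_on \<Omega>) (\<lambda>x. m x * f x)"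
  using assms square_integrable_bounded_mult[OF assms(2)] unfolding Linf_def by auto

lemma L2_tendsto_Linf_mult:
  assumes "Linf \<Omega> m" "\<And>k. square_integrable (lebesgue_on \<Omega>) (F k)"
    "square_integrable (lebesgue_on \<Omega>) f" "L2_tendsto (lebesgue_on \<Omega>) F f"
  shows "L2_tendsto (lebesgue_on \<Omega>) (\<lambda>k x. m x * F k x) (\<lambda>x. m x * f x)"
  using assms L2_tendsto_bounded_mult[OF assms(2-4)] unfolding Linf_def by auto

definition ctest :: "(real^'n::finite \<Rightarrow> real) \<Rightarrow> (real^'n \<Rightarrow> real) \<Rightarrow> real^'n \<Rightarrow> complex" where
  "ctest a b x = complex_of_real (a x) + \<i> * complex_of_real (b x)"

lemma square_integrable_ctest:
  "open \<Omega> \<Longrightarrow> test_fun \<Omega> a \<Longrightarrow> test_fun \<Omega> b \<Longrightarrow> square_integrable (lebesgue_on \<Omega>) (ctest a b)"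
  unfolding ctest_def by (intro square_integrable_add square_integrable_cmult test_fun_square_integrable)

definition H1_approximation :: "(real^'n::finite) set \<Rightarrow> (nat \<Rightarrow> real^'n \<Rightarrow> real) \<Rightarrow> (nat \<Rightarrow> real^'n \<Rightarrow> real)
    \<Rightarrow> (real^'n \<Rightarrow> complex) \<Rightarrow> ('n \<Rightarrow> real^'n \<Rightarrow> complex) \<Rightarrow> bool" where
  "H1_approximation \<Omega> a b e G \<longleftrightarrow> (\<forall>k. test_fun \<Omega> (a k) \<and> test_fun \<Omega> (b k))
     \<and> L2_tendsto (lebesgue_on \<Omega>) (\<lambda>k. ctest (a k) (b k)) e
     \<and> (\<forall>i. L2_tendsto (lebesgue_on \<Omega>) (\<lambda>k. ctest (pderiv i (a k)) (pderiv i (b k))) (G i))"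

lemma square_integrable_wgrad:
  assumes "H1 \<Omega> u"
  shows "square_integrable (lebesgue_on \<Omega>) (\<lambda>x. wgrad \<Omega> u x $ i)"
proof -
  have "\<exists>g. L2 \<Omega> g \<and> weak_partial \<Omega> u i g"
    using assms by (simp add: H1_def)
  then have "L2 \<Omega> (SOME g. L2 \<Omega> g \<and> weak_partial \<Omega> u i g)"
    by (rule someI2_ex) simp
  then show ?thesis
    by (simp add: wgrad_def L2_iff_square_integrable)
qed

lemma H10_imp_H1_approximation:
  assumes "H10 \<Omega> u"
  shows "\<exists>a b. H1_approximation \<Omega> a b u (\<lambda>i x. wgrad \<Omega> u x $ i)"
proof -
  obtain a b :: "nat \<Rightarrow> real^'a \<Rightarrow> real" where t: "\<forall>k. test_fun \<Omega> (a k) \<and> test_fun \<Omega> (b k)"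
    and lim: "(\<lambda>k. (\<integral>x. (cmod (ctest (a k) (b k) x - u x))\<^sup>2 \<partial>lebesgue_on \<Omega>)
          + (\<Sum>i\<in>UNIV. \<integral>x. (cmod (ctest (pderiv i (a k)) (pderiv i (b k)) x - wgrad \<Omega> u x $ i))\<^sup>2
              \<partial>lebesgue_on \<Omega>)) \<longlonglongrightarrow> 0"
    using assms unfolding H10_def ctest_def by blast
  define P where "P k = (\<integral>x. (cmod (ctest (a k) (b k) x - u x))\<^sup>2 \<partial>lebesgue_on \<Omega>)" for k
  define Q where "Q i k = (\<integral>x. (cmod (ctest (pderiv i (a k)) (pderiv i (b k)) x - wgrad \<Omega> u x $ i))\<^sup>2
      \<partial>lebesgue_on \<Omega>)" for i k
  have nonneg: "0 \<le> P k" "0 \<le> Q i k" for i k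
    by (simp_all add: P_def Q_def)
  have lim': "(\<lambda>k. P k + (\<Sum>i\<in>UNIV. Q i k)) \<longlonglongrightarrow> 0"
    using lim unfolding P_def Q_def .
  have bP: "norm (P k) \<le> P k + (\<Sum>i\<in>UNIV. Q i k)" for k
    using nonneg by (simp add: sum_nonneg)
  have bQ: "norm (Q i k) \<le> P k + (\<Sum>i\<in>UNIV. Q i k)" for i k
    using nonneg member_le_sum[of i UNIV "\<lambda>i. Q i k"] by (simp add: add_increasing)
  have "P \<longlonglongrightarrow> 0"
    by (rule Lim_null_comparison[OF always_eventually[OF allI[OF bP]] lim'])
  moreover have "Q i \<longlonglongrightarrow> 0" for i
    by (rule Lim_null_comparison[OF always_eventually[OF allI[OF bQ]] lim'])
  ultimately show ?thesis
    using t unfolding H1_approximation_def L2_tendsto_def P_def Q_def by blast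
qed
lemma H1_approximation_diff:
  assumes "open \<Omega>" "H1_approximation \<Omega> a b u Gu" "H1_approximation \<Omega> a' b' v Gv"
    "square_integrable (lebesgue_on \<Omega>) u" "square_integrable (lebesgue_on \<Omega>) v"
    "\<And>i. square_integrable (lebesgue_on \<Omega>) (Gu i)" "\<And>i. square_integrable (lebesgue_on \<Omega>) (Gv i)"
  shows "H1_approximation \<Omega> (\<lambda>k x. a k x - a' k x) (\<lambda>k x. b k x - b' k x)
    (\<lambda>x. u x - v x) (\<lambda>i x. Gu i x - Gv i x)"
proof -
  have t: "test_fun \<Omega> (a k)" "test_fun \<Omega> (b k)" "test_fun \<Omega> (a' k)" "test_fun \<Omega> (b' k)" for k
    using assms(2,3) unfolding H1_approximation_def by auto
  have diff: "ctest (\<lambda>x. a k x - a' k x) (\<lambda>x. b k x - b' k x) x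
      = ctest (a k) (b k) x - ctest (a' k) (b' k) x" for k x
    by (simp add: ctest_def algebra_simps)
  have pdiff: "ctest (pderiv i (\<lambda>x. a k x - a' k x)) (pderiv i (\<lambda>x. b k x - b' k x)) x
      = ctest (pderiv i (a k)) (pderiv i (b k)) x - ctest (pderiv i (a' k)) (pderiv i (b' k)) x" for i k x
    using t by (simp add: ctest_def pderiv_diff test_fun_def smooth_differentiable algebra_simps)
  have "L2_tendsto (lebesgue_on \<Omega>) (\<lambda>k x. ctest (a k) (b k) x - ctest (a' k) (b' k) x) (\<lambda>x. u x - v x)"
    using assms t unfolding H1_approximation_def
    by (intro L2_tendsto_diff square_integrable_ctest) auto
  moreover have "L2_tendsto (lebesgue_on \<Omega>)
      (\<lambda>k x. ctest (pderiv i (a k)) (pderiv i (b k)) x - ctest (pderiv i (a' k)) (pderiv i (b' k)) x)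
      (\<lambda>x. Gu i x - Gv i x)" for i
    using assms t unfolding H1_approximation_def
    by (intro L2_tendsto_diff square_integrable_ctest test_fun_pderiv) auto
  ultimately show ?thesis
    using t test_fun_diff unfolding H1_approximation_def diff pdiff by blast
qed

section \<open>Integration by parts\<close>

lemma integral_mult_cnj_ctest:
  assumes "open \<Omega>" "test_fun \<Omega> a" "test_fun \<Omega> b" "square_integrable (lebesgue_on \<Omega>) g"
  shows "(\<integral>x. g x * cnj (ctest a b x) \<partial>lebesgue_on \<Omega>)
    = (\<integral>x. g x * complex_of_real (a x) \<partial>lebesgue_on \<Omega>) - \<i> * (\<integral>x. g x * complex_of_real (b x) \<partial>lebesgue_on \<Omega>)"
proof -
  have "integrable (lebesgue_on \<Omega>) (\<lambda>x. g x * complex_of_real (a x))"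
    "integrable (lebesgue_on \<Omega>) (\<lambda>x. \<i> * (g x * complex_of_real (b x)))"
    using assms by (simp_all add: integrable_mult_of_square_integrable test_fun_square_integrable)
  then have "(\<integral>x. g x * complex_of_real (a x) - \<i> * (g x * complex_of_real (b x)) \<partial>lebesgue_on \<Omega>)
    = (\<integral>x. g x * complex_of_real (a x) \<partial>lebesgue_on \<Omega>) - \<i> * (\<integral>x. g x * complex_of_real (b x) \<partial>lebesgue_on \<Omega>)"
    by simp
  moreover have "g x * cnj (ctest a b x) = g x * complex_of_real (a x) - \<i> * (g x * complex_of_real (b x))" for x
    by (simp add: ctest_def algebra_simps)
  ultimately show ?thesis
    by simp
qed

lemma integral_weak_div_test_fun:
  assumes "open \<Omega>" "test_fun \<Omega> \<psi>"
    and r: "\<And>i. square_integrable (lebesgue_on \<Omega>) (\<lambda>x. r x $ i)"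
    and "weak_div \<Omega> r w"
  shows "(\<Sum>i\<in>UNIV. \<integral>x. r x $ i * complex_of_real (pderiv i \<psi> x) \<partial>lebesgue_on \<Omega>)
    = - (\<integral>x. w x * complex_of_real (\<psi> x) \<partial>lebesgue_on \<Omega>)"
proof -
  have "\<And>i. integrable (lebesgue_on \<Omega>) (\<lambda>x. r x $ i * complex_of_real (pderiv i \<psi> x))"
    using assms by (intro integrable_mult_of_square_integrable test_fun_square_integrable test_fun_pderiv r)
  then have "(\<Sum>i\<in>UNIV. \<integral>x. r x $ i * complex_of_real (pderiv i \<psi> x) \<partial>lebesgue_on \<Omega>)
    = (\<integral>x. (\<Sum>i\<in>UNIV. r x $ i * complex_of_real (pderiv i \<psi> x)) \<partial>lebesgue_on \<Omega>)"
    by (simp add: integral_sum)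
  then show ?thesis
    using assms(2,4) by (simp add: weak_div_def)
qed

lemma integral_weak_div_ctest:
  assumes "open \<Omega>" "test_fun \<Omega> a" "test_fun \<Omega> b"
    and r: "\<And>i. square_integrable (lebesgue_on \<Omega>) (\<lambda>x. r x $ i)"
    and w: "square_integrable (lebesgue_on \<Omega>) w" and "weak_div \<Omega> r w"
  shows "(\<integral>x. w x * cnj (ctest a b x) \<partial>lebesgue_on \<Omega>)
    = - (\<Sum>i\<in>UNIV. \<integral>x. r x $ i * cnj (ctest (pderiv i a) (pderiv i b) x) \<partial>lebesgue_on \<Omega>)"
proof -
  have "(\<Sum>i\<in>UNIV. \<integral>x. r x $ i * cnj (ctest (pderiv i a) (pderiv i b) x) \<partial>lebesgue_on \<Omega>)
    = (\<Sum>i\<in>UNIV. \<integral>x. r x $ i * complex_of_real (pderiv i a x) \<partial>lebesgue_on \<Omega>)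
      - \<i> * (\<Sum>i\<in>UNIV. \<integral>x. r x $ i * complex_of_real (pderiv i b x) \<partial>lebesgue_on \<Omega>)"
    using integral_mult_cnj_ctest[OF assms(1) test_fun_pderiv[OF assms(2)] test_fun_pderiv[OF assms(3)] r]
    by (simp add: sum_subtractf sum_distrib_left)
  then show ?thesis
    using integral_weak_div_test_fun[OF assms(1,2) r assms(6)] integral_weak_div_test_fun[OF assms(1,3) r assms(6)]
    by (simp add: integral_mult_cnj_ctest[OF assms(1-3) w])
qed

lemma integral_weak_div_H1_approximation:
  assumes "open \<Omega>" and approx: "H1_approximation \<Omega> a b e G"
    and e: "square_integrable (lebesgue_on \<Omega>) e" and G: "\<And>i. square_integrable (lebesgue_on \<Omega>) (G i)"
    and r: "\<And>i. square_integrable (lebesgue_on \<Omega>) (\<lambda>x. r x $ i)"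
    and w: "square_integrable (lebesgue_on \<Omega>) w" and "weak_div \<Omega> r w"
  shows "(\<integral>x. w x * cnj (e x) \<partial>lebesgue_on \<Omega>) = - (\<Sum>i\<in>UNIV. \<integral>x. r x $ i * cnj (G i x) \<partial>lebesgue_on \<Omega>)"
proof (rule LIMSEQ_unique)
  have t: "test_fun \<Omega> (a k)" "test_fun \<Omega> (b k)" for k
    using approx by (simp_all add: H1_approximation_def)
  have "L2_tendsto (lebesgue_on \<Omega>) (\<lambda>k. w) w"
    by (simp add: L2_tendsto_def)
  then show "(\<lambda>k. \<integral>x. w x * cnj (ctest (a k) (b k) x) \<partial>lebesgue_on \<Omega>)
      \<longlonglongrightarrow> (\<integral>x. w x * cnj (e x) \<partial>lebesgue_on \<Omega>)"
    using approx by (intro tendsto_integral_mult_cnj w e square_integrable_ctest[OF assms(1) t])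
      (simp_all add: H1_approximation_def)
  have "L2_tendsto (lebesgue_on \<Omega>) (\<lambda>k x. r x $ i) (\<lambda>x. r x $ i)" for i
    by (simp add: L2_tendsto_def)
  then have "(\<lambda>k. - (\<Sum>i\<in>UNIV. \<integral>x. r x $ i * cnj (ctest (pderiv i (a k)) (pderiv i (b k)) x) \<partial>lebesgue_on \<Omega>))
      \<longlonglongrightarrow> - (\<Sum>i\<in>UNIV. \<integral>x. r x $ i * cnj (G i x) \<partial>lebesgue_on \<Omega>)"
    using approx by (intro tendsto_minus tendsto_sum tendsto_integral_mult_cnj r G
        square_integrable_ctest[OF assms(1)] test_fun_pderiv t) (simp_all add: H1_approximation_def)
  then show "(\<lambda>k. \<integral>x. w x * cnj (ctest (a k) (b k) x) \<partial>lebesgue_on \<Omega>)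
      \<longlonglongrightarrow> - (\<Sum>i\<in>UNIV. \<integral>x. r x $ i * cnj (G i x) \<partial>lebesgue_on \<Omega>)"
    using integral_weak_div_ctest[OF assms(1) t r w assms(7)] by simp
qed

lemma convection_identity_ctest:
  assumes "open \<Omega>" "test_fun \<Omega> p" "test_fun \<Omega> q" and b: "Linf \<Omega> b" and divb: "Linf \<Omega> divb"
    and "weak_div \<Omega> (\<lambda>x. cvec (b x)) (\<lambda>x. complex_of_real (divb x))"
  defines "T \<equiv> ctest p q" and "D \<equiv> \<lambda>i. ctest (pderiv i p) (pderiv i q)"
  shows "(\<Sum>i\<in>UNIV. (\<integral>x. (complex_of_real (b x $ i) * D i x) * cnj (T x) \<partial>lebesgue_on \<Omega>)
      + (\<integral>x. T x * cnj (complex_of_real (b x $ i) * D i x) \<partial>lebesgue_on \<Omega>))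
    = - (\<integral>x. (complex_of_real (divb x) * T x) * cnj (T x) \<partial>lebesgue_on \<Omega>)"
proof -
  let ?M = "lebesgue_on \<Omega>" and ?bD = "\<lambda>i x. complex_of_real (b x $ i) * D i x"
  \<comment> \<open>the weak divergence of \<open>b\<close> is tested against \<open>h = |T|^2\<close>\<close>
  define h where "h x = p x * p x + 1 * (q x * q x)" for x
  have "test_fun \<Omega> h"
    unfolding h_def using assms(2,3) by (intro test_fun_add_cmult test_fun_mult)
  have dp: "p differentiable (at x)" and dq: "q differentiable (at x)" for x
    using assms(2,3) by (simp_all add: test_fun_def smooth_differentiable)
  have "pderiv i h x = pderiv i (\<lambda>y. p y * p y) x + 1 * pderiv i (\<lambda>y. q y * q y) x" for i x
    unfolding h_def by (intro pderiv_add_cmult differentiable_mult dp dq)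
  then have dh: "cvec (b x) $ i * complex_of_real (pderiv i h x) = ?bD i x * cnj (T x) + T x * cnj (?bD i x)"
    for i x
    by (simp add: pderiv_mult[OF dp dp] pderiv_mult[OF dq dq] cvec_def T_def D_def ctest_def
        complex_eq_iff algebra_simps)
  have bD: "square_integrable ?M (?bD i)" for i
    unfolding D_def using assms(1-3)
    by (intro Linf_square_integrable_mult[OF Linf_complex_of_real[OF Linf_vec_nth[OF b]]]
        square_integrable_ctest test_fun_pderiv)
  have T: "square_integrable ?M T"
    unfolding T_def using assms(1-3) by (rule square_integrable_ctest)
  have int: "integrable ?M (\<lambda>x. ?bD i x * cnj (T x))" "integrable ?M (\<lambda>x. T x * cnj (?bD i x))" for i
    using bD T by (intro integrable_mult_of_square_integrable square_integrable_cnj; simp)+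
  have "(\<Sum>i\<in>UNIV. (\<integral>x. ?bD i x * cnj (T x) \<partial>?M) + (\<integral>x. T x * cnj (?bD i x) \<partial>?M))
      = (\<integral>x. (\<Sum>i\<in>UNIV. cvec (b x) $ i * complex_of_real (pderiv i h x)) \<partial>?M)"
    using int by (simp add: dh integral_sum)
  also have "\<dots> = - (\<integral>x. complex_of_real (divb x) * complex_of_real (h x) \<partial>?M)"
    using assms(6) \<open>test_fun \<Omega> h\<close> unfolding weak_div_def by blast
  also have "\<dots> = - (\<integral>x. (complex_of_real (divb x) * T x) * cnj (T x) \<partial>?M)"
    by (simp add: h_def T_def ctest_def complex_eq_iff algebra_simps)
  finally show ?thesis .
qed

lemma convection_identity_H1_approximation:
  assumes "open \<Omega>" and approx: "H1_approximation \<Omega> p q e G"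
    and e: "square_integrable (lebesgue_on \<Omega>) e" and G: "\<And>i. square_integrable (lebesgue_on \<Omega>) (G i)"
    and b: "Linf \<Omega> b" and divb: "Linf \<Omega> divb"
    and wd: "weak_div \<Omega> (\<lambda>x. cvec (b x)) (\<lambda>x. complex_of_real (divb x))"
  shows "(\<Sum>i\<in>UNIV. (\<integral>x. (complex_of_real (b x $ i) * G i x) * cnj (e x) \<partial>lebesgue_on \<Omega>)
      + (\<integral>x. e x * cnj (complex_of_real (b x $ i) * G i x) \<partial>lebesgue_on \<Omega>))
    = - (\<integral>x. (complex_of_real (divb x) * e x) * cnj (e x) \<partial>lebesgue_on \<Omega>)"
proof (rule LIMSEQ_unique)
  let ?M = "lebesgue_on \<Omega>" and ?b = "\<lambda>i x. complex_of_real (b x $ i)"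
    and ?d = "\<lambda>x. complex_of_real (divb x)"
  let ?T = "\<lambda>k. ctest (p k) (q k)" and ?D = "\<lambda>k i. ctest (pderiv i (p k)) (pderiv i (q k))"
  have t: "test_fun \<Omega> (p k)" "test_fun \<Omega> (q k)" for k
    using approx by (simp_all add: H1_approximation_def)
  have T: "square_integrable ?M (?T k)" "L2_tendsto ?M ?T e" for k
    using approx square_integrable_ctest[OF assms(1) t] by (simp_all add: H1_approximation_def)
  have D: "square_integrable ?M (?D k i)" "L2_tendsto ?M (\<lambda>k. ?D k i) (G i)" for k i
    using approx square_integrable_ctest[OF assms(1) test_fun_pderiv test_fun_pderiv, OF t]
    by (simp_all add: H1_approximation_def)
  have bi: "Linf \<Omega> (?b i)" for i
    using b by (intro Linf_complex_of_real Linf_vec_nth)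
  have bD: "square_integrable ?M (\<lambda>x. ?b i x * ?D k i x)" "square_integrable ?M (\<lambda>x. ?b i x * G i x)"
    "L2_tendsto ?M (\<lambda>k x. ?b i x * ?D k i x) (\<lambda>x. ?b i x * G i x)" for k i
    using bi D G by (simp_all add: Linf_square_integrable_mult L2_tendsto_Linf_mult)
  have dT: "square_integrable ?M (\<lambda>x. ?d x * ?T k x)" "square_integrable ?M (\<lambda>x. ?d x * e x)"
    "L2_tendsto ?M (\<lambda>k x. ?d x * ?T k x) (\<lambda>x. ?d x * e x)" for k
    using Linf_complex_of_real[OF divb] T e by (simp_all add: Linf_square_integrable_mult L2_tendsto_Linf_mult)
  show "(\<lambda>k. \<Sum>i\<in>UNIV. (\<integral>x. (?b i x * ?D k i x) * cnj (?T k x) \<partial>?M)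
      + (\<integral>x. ?T k x * cnj (?b i x * ?D k i x) \<partial>?M))
    \<longlonglongrightarrow> (\<Sum>i\<in>UNIV. (\<integral>x. (?b i x * G i x) * cnj (e x) \<partial>?M) + (\<integral>x. e x * cnj (?b i x * G i x) \<partial>?M))"
    using bD T e by (intro tendsto_sum tendsto_add tendsto_integral_mult_cnj)
  have "(\<lambda>k. - (\<integral>x. (?d x * ?T k x) * cnj (?T k x) \<partial>?M)) \<longlonglongrightarrow> - (\<integral>x. (?d x * e x) * cnj (e x) \<partial>?M)"
    using dT T e by (intro tendsto_minus tendsto_integral_mult_cnj)
  then show "(\<lambda>k. \<Sum>i\<in>UNIV. (\<integral>x. (?b i x * ?D k i x) * cnj (?T k x) \<partial>?M)
      + (\<integral>x. ?T k x * cnj (?b i x * ?D k i x) \<partial>?M))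
    \<longlonglongrightarrow> - (\<integral>x. (?d x * e x) * cnj (e x) \<partial>?M)"
    using convection_identity_ctest[OF assms(1) t b divb wd] by simp
qed

lemma convection_energy_identity:
  assumes "open \<Omega>" and approx: "H1_approximation \<Omega> p q e G"
    and e: "square_integrable (lebesgue_on \<Omega>) e" and G: "\<And>i. square_integrable (lebesgue_on \<Omega>) (G i)"
    and b: "Linf \<Omega> b" and divb: "Linf \<Omega> divb"
    and wd: "weak_div \<Omega> (\<lambda>x. cvec (b x)) (\<lambda>x. complex_of_real (divb x))"
  shows "wnorm2 \<Omega> (\<lambda>x. - divb x) e
    = 2 * Re (\<integral>x. (\<Sum>i\<in>UNIV. complex_of_real (b x $ i) * G i x) * cnj (e x) \<partial>lebesgue_on \<Omega>)"
proof -
  let ?M = "lebesgue_on \<Omega>" and ?bG = "\<lambda>i x. complex_of_real (b x $ i) * G i x"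
  have bG: "square_integrable ?M (?bG i)" for i
    using b G by (intro Linf_square_integrable_mult Linf_complex_of_real Linf_vec_nth)
  have int: "integrable ?M (\<lambda>x. ?bG i x * cnj (e x))" for i
    using bG e by (intro integrable_mult_of_square_integrable square_integrable_cnj)
  have de: "integrable ?M (\<lambda>x. (complex_of_real (divb x) * e x) * cnj (e x))"
    using divb e by (intro integrable_mult_of_square_integrable square_integrable_cnj
        Linf_square_integrable_mult Linf_complex_of_real)
  have cnj_eq: "(\<integral>x. e x * cnj (?bG i x) \<partial>?M) = (\<integral>x. cnj (?bG i x * cnj (e x)) \<partial>?M)" for i
    by (rule Bochner_Integration.integral_cong) simp_all
  have "(\<integral>x. e x * cnj (?bG i x) \<partial>?M) = cnj (\<integral>x. ?bG i x * cnj (e x) \<partial>?M)" for i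
    using cnj_eq[of i] Bochner_Integration.integral_cnj[of ?M "\<lambda>x. ?bG i x * cnj (e x)"] by (rule trans)
  then have "(\<Sum>i\<in>UNIV. (\<integral>x. ?bG i x * cnj (e x) \<partial>?M) + cnj (\<integral>x. ?bG i x * cnj (e x) \<partial>?M))
      = - (\<integral>x. (complex_of_real (divb x) * e x) * cnj (e x) \<partial>?M)"
    using convection_identity_H1_approximation[OF assms] by simp
  moreover have "(\<integral>x. (\<Sum>i\<in>UNIV. ?bG i x) * cnj (e x) \<partial>?M) = (\<Sum>i\<in>UNIV. \<integral>x. ?bG i x * cnj (e x) \<partial>?M)"
    using int by (simp add: sum_distrib_right integral_sum)
  ultimately have sum_cnj: "(\<integral>x. (\<Sum>i\<in>UNIV. ?bG i x) * cnj (e x) \<partial>?M) + cnj (\<integral>x. (\<Sum>i\<in>UNIV. ?bG i x) * cnj (e x) \<partial>?M)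
      = - (\<integral>x. (complex_of_real (divb x) * e x) * cnj (e x) \<partial>?M)"
    by (simp add: sum.distrib)
  have "2 * Re (\<integral>x. (\<Sum>i\<in>UNIV. ?bG i x) * cnj (e x) \<partial>?M)
      = Re (- (\<integral>x. (complex_of_real (divb x) * e x) * cnj (e x) \<partial>?M))"
    using arg_cong[where f = Re, OF sum_cnj] by simp
  also have "\<dots> = - (\<integral>x. Re ((complex_of_real (divb x) * e x) * cnj (e x)) \<partial>?M)"
    using Bochner_Integration.integral_Re[OF de] by simp
  also have "\<dots> = wnorm2 \<Omega> (\<lambda>x. - divb x) e"
    by (simp add: wnorm2_def complex_norm_square[symmetric] mult.assoc flip: integral_minus)
  finally show ?thesis ..
qed

section \<open>Hermitian and coercive matrices\<close>

lemma norm_vec_power2: "(norm (v::'a::real_normed_vector^'n::finite))\<^sup>2 = (\<Sum>i\<in>UNIV. (norm (v $ i))\<^sup>2)"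
  unfolding norm_vec_def L2_set_def by (simp add: sum_nonneg)

lemma cdot_add_left: "cdot (u + w) v = cdot u v + cdot w v"
  by (simp add: cdot_def distrib_right sum.distrib)

lemma cdot_diff_left: "cdot (u - w) v = cdot u v - cdot w v"
  by (simp add: cdot_def left_diff_distrib sum_subtractf)

lemma cdot_diff_right: "cdot u (v - w) = cdot u v - cdot u w"
  by (simp add: cdot_def right_diff_distrib sum_subtractf)

lemma cdot_scale_left: "cdot (c *s u) v = c * cdot u v"
  by (simp add: cdot_def sum_distrib_left mult.assoc)

lemma cdot_scale_right: "cdot u (c *s v) = cnj c * cdot u v"
  by (simp add: cdot_def sum_distrib_left algebra_simps)

lemma cdot_zero_left: "cdot 0 v = 0"
  by (simp add: cdot_def)

lemma cdot_commute: "cdot v u = cnj (cdot u v)"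
  by (simp add: cdot_def mult.commute)

lemma norm_cdot_le: "cmod (cdot u v) \<le> norm u * norm v"
proof -
  have "cmod (cdot u v) \<le> (\<Sum>i\<in>UNIV. \<bar>cmod (u $ i)\<bar> * \<bar>cmod (v $ i)\<bar>)"
    unfolding cdot_def using norm_sum[of "\<lambda>i. u $ i * cnj (v $ i)" UNIV] by (simp add: norm_mult)
  also have "\<dots> \<le> norm u * norm v"
    unfolding norm_vec_def by (rule L2_set_mult_ineq)
  finally show ?thesis .
qed

definition hermitian_matrix :: "complex^'n^'n \<Rightarrow> bool" where
  "hermitian_matrix A \<longleftrightarrow> (\<forall>i j. A $ i $ j = cnj (A $ j $ i))"

lemma cdot_hermitian_matrix:
  assumes "hermitian_matrix A"
  shows "cdot (A *v u) v = cdot u (A *v v)"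
proof -
  have "cdot (A *v u) v = (\<Sum>i\<in>UNIV. \<Sum>j\<in>UNIV. A $ i $ j * u $ j * cnj (v $ i))"
    by (simp add: cdot_def matrix_vector_mult_def sum_distrib_right)
  also have "\<dots> = (\<Sum>j\<in>UNIV. \<Sum>i\<in>UNIV. u $ j * cnj (A $ j $ i * v $ i))"
  proof (subst sum.swap, intro sum.cong refl)
    fix i j
    have "A $ i $ j = cnj (A $ j $ i)"
      using assms unfolding hermitian_matrix_def by blast
    then show "A $ i $ j * u $ j * cnj (v $ i) = u $ j * cnj (A $ j $ i * v $ i)"
      by simp
  qed
  also have "\<dots> = cdot u (A *v v)"
    by (simp add: cdot_def matrix_vector_mult_def sum_distrib_left)
  finally show ?thesis .
qed

definition coercive_matrix :: "real \<Rightarrow> complex^'n^'n \<Rightarrow> bool" where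
  "coercive_matrix \<alpha> A \<longleftrightarrow> (\<forall>v. \<alpha> * (norm v)\<^sup>2 \<le> Re (cdot (A *v v) v))"

lemma coercive_matrix_inj:
  assumes "coercive_matrix \<alpha> A" "0 < \<alpha>"
  shows "inj ((*v) A)"
proof (rule injI)
  fix u w
  assume "A *v u = A *v w"
  then have "A *v (u - w) = 0"
    by (simp add: matrix_vector_mult_diff_distrib)
  then have "\<alpha> * (norm (u - w))\<^sup>2 \<le> 0"
    using assms(1) unfolding coercive_matrix_def by (metis cdot_zero_left zero_complex.simps(1))
  then show "u = w"
    using assms(2) by (simp add: mult_le_0_iff)
qed

lemma coercive_matrix_det_nonzero: "coercive_matrix \<alpha> A \<Longrightarrow> 0 < \<alpha> \<Longrightarrow> det A \<noteq> 0"
  using det_nz_iff_inj_gen[OF matrix_vector_mul_linear_gen] coercive_matrix_inj by fastforce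

lemma matrix_mult_matrix_inv_vec:
  fixes A :: "'a::field^'n^'n"
  assumes "det A \<noteq> 0"
  shows "A *v (matrix_inv A *v y) = y"
proof -
  have "A ** matrix_inv A = mat 1"
    using assms unfolding invertible_det_nz[symmetric] invertible_def matrix_inv_def
    by (rule someI2_ex) simp
  then show ?thesis
    by (simp add: matrix_vector_mul_assoc)
qed

lemma matrix_inv_vec_nth_cramer:
  fixes A :: "'a::field^'n^'n"
  assumes "det A \<noteq> 0"
  shows "(matrix_inv A *v y) $ k = det (\<chi> i j. if j = k then y $ i else A $ i $ j) / det A"
  using cramer[OF assms] matrix_mult_matrix_inv_vec[OF assms] by simp

lemma coercive_matrix_inv_norm_le:
  assumes "coercive_matrix \<alpha> A" "0 < \<alpha>"
  shows "(norm (matrix_inv A *v y))\<^sup>2 \<le> (norm y)\<^sup>2 / \<alpha>\<^sup>2"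
proof -
  define Y where "Y = matrix_inv A *v y"
  have "\<alpha> * (norm Y)\<^sup>2 \<le> Re (cdot y Y)"
    using assms(1) matrix_mult_matrix_inv_vec[OF coercive_matrix_det_nonzero[OF assms]] unfolding coercive_matrix_def Y_def
    by (metis (no_types))
  also have "\<dots> \<le> norm y * norm Y"
    by (rule order_trans[OF complex_Re_le_cmod norm_cdot_le])
  finally have "\<alpha> * norm Y \<le> norm y"
    by (cases "norm Y = 0") (simp_all add: power2_eq_square)
  then have "(\<alpha> * norm Y)\<^sup>2 \<le> (norm y)\<^sup>2"
    using assms(2) by (simp add: power_mono)
  then show ?thesis
    using assms(2) by (simp add: Y_def field_simps)
qed

lemma Re_cdot_le_quadratic_form_inverse:
  assumes "coercive_matrix \<alpha> A" "0 < \<alpha>" "hermitian_matrix A"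
  shows "4 * Re (cdot r g) \<le> Re (cdot (matrix_inv A *v (r + A *v g)) (r + A *v g))"
proof -
  define R where "R = r + A *v g"
  define Y where "Y = matrix_inv A *v R"
  have AY: "A *v Y = R"
    unfolding Y_def by (rule matrix_mult_matrix_inv_vec[OF coercive_matrix_det_nonzero[OF assms(1,2)]])
  \<comment> \<open>coercivity applied to \<open>Y - 2 g\<close>, whose image under \<open>A\<close> is \<open>R - 2 A g\<close>\<close>
  have "0 \<le> Re (cdot (A *v (Y - 2 *s g)) (Y - 2 *s g))"
    using assms(1,2) unfolding coercive_matrix_def
    by (metis mult_nonneg_nonneg less_imp_le zero_le_power2 order_trans)
  also have "A *v (Y - 2 *s g) = R - 2 *s (A *v g)"
    by (simp add: matrix_vector_mult_diff_distrib AY vector_scalar_commute)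
  also have "Re (cdot (R - 2 *s (A *v g)) (Y - 2 *s g))
      = Re (cdot Y R) - 4 * Re (cdot R g) + 4 * Re (cdot (A *v g) g)"
  proof -
    have "cdot (A *v g) Y = cdot g R"
      using cdot_hermitian_matrix[OF assms(3)] AY by metis
    moreover have "Re (cdot R Y) = Re (cdot Y R)" "Re (cdot g R) = Re (cdot R g)"
      using cdot_commute[of Y R] cdot_commute[of g R] by simp_all
    ultimately show ?thesis
      by (simp add: cdot_diff_left cdot_diff_right cdot_scale_left cdot_scale_right algebra_simps)
  qed
  finally show ?thesis
    by (simp add: R_def Y_def cdot_add_left)
qed

lemma Re_mult_cnj_le_inverse_norm_power2:
  fixes c :: real
  assumes "0 < c"
  shows "4 * Re (w * cnj e) \<le> inverse c * (cmod (complex_of_real c * e + w))\<^sup>2"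
proof -
  have "(cmod (complex_of_real c * e + w))\<^sup>2 - 4 * c * Re (w * cnj e)
      = (c * Re e - Re w)\<^sup>2 + (c * Im e - Im w)\<^sup>2"
    unfolding cmod_power2 by (simp add: power2_eq_square algebra_simps)
  then have "4 * c * Re (w * cnj e) \<le> (cmod (complex_of_real c * e + w))\<^sup>2"
    by (smt (verit) zero_le_power2)
  then show ?thesis
    using assms by (simp add: field_simps)
qed

section \<open>Pointwise coercivity and the dual energy\<close>

lemma AE_notin_of_set_integral_nonneg:
  fixes q :: "'a \<Rightarrow> real"
  assumes "integrable M (\<lambda>x. indicator S x * q x)" "0 \<le> (\<integral>x. indicator S x * q x \<partial>M)"
    and neg: "\<And>x. x \<in> S \<Longrightarrow> q x < 0"
  shows "AE x in M. x \<notin> S"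
proof -
  have le: "indicator S x * q x \<le> 0" for x
    using neg[of x] by (cases "x \<in> S") (auto simp: indicator_def)
  then have "0 \<le> (\<integral>x. - (indicator S x * q x) \<partial>M)"
    by (intro integral_nonneg_AE AE_I2) simp
  with assms(2) have "(\<integral>x. - (indicator S x * q x) \<partial>M) = 0"
    by simp
  then have "AE x in M. - (indicator S x * q x) = 0"
    using assms(1) le by (subst integral_nonneg_eq_0_iff_AE[symmetric]) auto
  then show ?thesis
    by eventually_elim (auto simp: indicator_def dest: neg split: if_splits)
qed

lemma AE_nonneg_of_set_integrals_nonneg:
  fixes q :: "'a::euclidean_space \<Rightarrow> real"
  assumes \<Omega>: "\<Omega> \<in> sets lebesgue" and q: "q \<in> borel_measurable (lebesgue_on \<Omega>)"
    and bounded: "AE x in lebesgue_on \<Omega>. \<bar>q x\<bar> \<le> C"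
    and nonneg: "\<And>S. S \<in> sets (lebesgue_on \<Omega>) \<Longrightarrow> emeasure (lebesgue_on \<Omega>) S < \<infinity> \<Longrightarrow>
      0 \<le> (\<integral>x. indicator S x * q x \<partial>lebesgue_on \<Omega>)"
  shows "AE x in lebesgue_on \<Omega>. 0 \<le> q x"
proof -
  let ?M = "lebesgue_on \<Omega>"
  have "AE x in ?M. x \<in> cball 0 (real n) \<longrightarrow> 0 \<le> q x" for n :: nat
  proof -
    define S where "S = {x \<in> space ?M. q x < 0} \<inter> cball 0 (real n)"
    have cball: "cball (0::'a) (real n) \<in> sets lebesgue"
      by (rule fmeasurableD[OF lmeasurable_cball])
    have "{x \<in> space ?M. q x < 0} \<in> sets ?M"
      using q by measurable
    moreover have "cball 0 (real n) \<inter> space ?M \<in> sets ?M"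
      using cball \<Omega> by (simp add: sets_restrict_space_iff sets.Int)
    ultimately have "{x \<in> space ?M. q x < 0} \<inter> (cball 0 (real n) \<inter> space ?M) \<in> sets ?M"
      by (rule sets.Int)
    moreover have "{x \<in> space ?M. q x < 0} \<inter> (cball 0 (real n) \<inter> space ?M) = S"
      by (auto simp: S_def)
    ultimately have S: "S \<in> sets ?M"
      by simp
    have "emeasure ?M S = emeasure lebesgue S"
      using \<Omega> S by (intro emeasure_restrict_space) (auto simp: sets_restrict_space_iff)
    also have "\<dots> \<le> emeasure lebesgue (cball (0::'a) (real n))"
      by (rule emeasure_mono[OF _ cball]) (auto simp: S_def)
    also have "\<dots> < \<infinity>"
      using lmeasurable_cball unfolding fmeasurable_def by blast
    finally have fin: "emeasure ?M S < \<infinity>" .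
    have "integrable ?M (\<lambda>x. indicator S x * q x)"
    proof (rule Bochner_Integration.integrable_bound[where f = "\<lambda>x. indicator S x * C"])
      show "integrable ?M (\<lambda>x. indicator S x * C)"
        using S fin by simp
      show "AE x in ?M. norm (indicator S x * q x) \<le> norm (indicator S x * C)"
        using bounded by eventually_elim (auto simp: indicator_def)
    qed (use q S in simp)
    then have "AE x in ?M. x \<notin> S"
      using nonneg[OF S fin] by (rule AE_notin_of_set_integral_nonneg) (simp add: S_def)
    with AE_space show ?thesis
      by eventually_elim (auto simp: S_def)
  qed
  then have "AE x in ?M. \<forall>n::nat. x \<in> cball 0 (real n) \<longrightarrow> 0 \<le> q x"
    by (subst AE_all_countable) blast
  then show ?thesis
    by eventually_elim (meson mem_cball_0 real_arch_simple)
qed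

lemma borel_measurable_quadratic_form:
  assumes "\<And>i j. (\<lambda>x. A x $ i $ j) \<in> borel_measurable M"
  shows "(\<lambda>x. cdot (A x *v v) v) \<in> borel_measurable M"
  unfolding cdot_def matrix_vector_mult_def vec_lambda_beta
  by (intro borel_measurable_sum borel_measurable_times assms borel_measurable_const)

lemma Linf_quadratic_form_bounded:
  assumes "\<forall>i j. Linf \<Omega> (\<lambda>x. A x $ i $ j)"
  shows "\<exists>C. AE x in lebesgue_on \<Omega>. cmod (cdot (A x *v v) v) \<le> C"
proof -
  obtain B where "\<And>i j. AE x in lebesgue_on \<Omega>. cmod (A x $ i $ j) \<le> B i j"
    using assms unfolding Linf_def by metis
  then have "AE x in lebesgue_on \<Omega>. \<forall>i j. cmod (A x $ i $ j) \<le> B i j"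
    by (simp add: AE_all_countable)
  then have "AE x in lebesgue_on \<Omega>.
      cmod (cdot (A x *v v) v) \<le> (\<Sum>i\<in>UNIV. \<Sum>j\<in>UNIV. B i j * cmod (v $ j) * cmod (v $ i))"
  proof eventually_elim
    case (elim x)
    have "cmod (cdot (A x *v v) v) \<le> (\<Sum>i\<in>UNIV. \<Sum>j\<in>UNIV. cmod (A x $ i $ j * v $ j * cnj (v $ i)))"
      unfolding cdot_def matrix_vector_mult_def
      by (simp add: sum_distrib_right) (intro order_trans[OF norm_sum] sum_mono norm_sum)
    also have "\<dots> \<le> (\<Sum>i\<in>UNIV. \<Sum>j\<in>UNIV. B i j * cmod (v $ j) * cmod (v $ i))"
      using elim by (intro sum_mono) (simp add: norm_mult mult_right_mono)
    finally show ?case .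
  qed
  then show ?thesis
    by blast
qed

lemma set_integral_coercive_quadratic_form_nonneg:
  fixes \<Omega> :: "(real^'n::finite) set" and A :: "real^'n \<Rightarrow> complex^'n^'n"
  assumes Q: "(\<lambda>x. cdot (A x *v v) v) \<in> borel_measurable (lebesgue_on \<Omega>)"
    and C: "AE x in lebesgue_on \<Omega>. cmod (cdot (A x *v v) v) \<le> C"
    and A_coerc: "\<forall>\<phi>. L2v \<Omega> \<phi> \<longrightarrow> \<alpha> * (\<integral>x. (norm (\<phi> x))\<^sup>2 \<partial>lebesgue_on \<Omega>)
      \<le> Re (\<integral>x. cdot (A x *v \<phi> x) (\<phi> x) \<partial>lebesgue_on \<Omega>)"
    and S: "S \<in> sets (lebesgue_on \<Omega>)" "emeasure (lebesgue_on \<Omega>) S < \<infinity>"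
  shows "0 \<le> (\<integral>x. indicator S x * (Re (cdot (A x *v v) v) - \<alpha> * (norm v)\<^sup>2) \<partial>lebesgue_on \<Omega>)"
proof -
  let ?M = "lebesgue_on \<Omega>" and ?Q = "\<lambda>x. cdot (A x *v v) v"
  have ind: "integrable ?M (indicator S :: _ \<Rightarrow> real)"
    using S by simp
  define \<phi> where "\<phi> x = indicator S x *\<^sub>R v" for x
  have "\<phi> \<in> borel_measurable ?M"
    unfolding \<phi>_def using S by measurable
  moreover have norm_\<phi>: "(norm (\<phi> x))\<^sup>2 = indicator S x * (norm v)\<^sup>2" for x
    by (simp add: \<phi>_def indicator_def)
  ultimately have "L2v \<Omega> \<phi>"
    using ind by (simp add: L2v_def)
  then have coerc: "\<alpha> * (\<integral>x. indicator S x * (norm v)\<^sup>2 \<partial>?M) \<le> Re (\<integral>x. cdot (A x *v \<phi> x) (\<phi> x) \<partial>?M)"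
    using A_coerc[rule_format, of \<phi>] by (simp only: norm_\<phi>)
  have Q\<phi>: "cdot (A x *v \<phi> x) (\<phi> x) = complex_of_real (indicator S x) * ?Q x" for x
    by (simp add: \<phi>_def indicator_def cdot_def)
  have "integrable ?M (\<lambda>x. complex_of_real (indicator S x) * ?Q x)"
  proof (rule Bochner_Integration.integrable_bound[where f = "\<lambda>x. indicator S x * C"])
    show "AE x in ?M. norm (complex_of_real (indicator S x) * ?Q x) \<le> norm (indicator S x * C)"
      using C by eventually_elim (auto simp: indicator_def)
  qed (use ind S Q in simp_all)
  then have "Re (\<integral>x. cdot (A x *v \<phi> x) (\<phi> x) \<partial>?M) = (\<integral>x. indicator S x * Re (?Q x) \<partial>?M)"
    by (simp add: Q\<phi> flip: Bochner_Integration.integral_Re)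
  moreover have "integrable ?M (\<lambda>x. indicator S x * Re (?Q x))"
    using integrable_Re[OF \<open>integrable ?M (\<lambda>x. complex_of_real (indicator S x) * ?Q x)\<close>] by simp
  ultimately show ?thesis
    using coerc ind by (simp add: right_diff_distrib mult.left_commute)
qed

lemma AE_coercive_quadratic_form:
  fixes \<Omega> :: "(real^'n::finite) set" and A :: "real^'n \<Rightarrow> complex^'n^'n"
  assumes "open \<Omega>" and A_meas: "\<forall>i j. Linf \<Omega> (\<lambda>x. A x $ i $ j)"
    and A_coerc: "\<forall>\<phi>. L2v \<Omega> \<phi> \<longrightarrow> \<alpha> * (\<integral>x. (norm (\<phi> x))\<^sup>2 \<partial>lebesgue_on \<Omega>)
      \<le> Re (\<integral>x. cdot (A x *v \<phi> x) (\<phi> x) \<partial>lebesgue_on \<Omega>)"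
  shows "AE x in lebesgue_on \<Omega>. \<alpha> * (norm v)\<^sup>2 \<le> Re (cdot (A x *v v) v)"
proof -
  let ?M = "lebesgue_on \<Omega>" and ?Q = "\<lambda>x. cdot (A x *v v) v"
  have Q: "?Q \<in> borel_measurable ?M"
    using A_meas unfolding Linf_def by (intro borel_measurable_quadratic_form) blast
  obtain C where C: "AE x in ?M. cmod (?Q x) \<le> C"
    using Linf_quadratic_form_bounded[OF A_meas] by blast
  have "AE x in ?M. 0 \<le> Re (?Q x) - \<alpha> * (norm v)\<^sup>2"
  proof (rule AE_nonneg_of_set_integrals_nonneg[where C = "C + \<bar>\<alpha>\<bar> * (norm v)\<^sup>2"])
    show "AE x in ?M. \<bar>Re (?Q x) - \<alpha> * (norm v)\<^sup>2\<bar> \<le> C + \<bar>\<alpha>\<bar> * (norm v)\<^sup>2"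
    proof (use C in eventually_elim)
      case (elim x)
      then have "\<bar>Re (?Q x)\<bar> \<le> C"
        by (rule order_trans[OF abs_Re_le_cmod])
      then show ?case
        using abs_triangle_ineq4[of "Re (?Q x)" "\<alpha> * (norm v)\<^sup>2"] by (simp add: abs_mult)
    qed
  qed (use sets_lebesgue_open[OF assms(1)] Q set_integral_coercive_quadratic_form_nonneg[OF Q C A_coerc]
      in simp_all)
  then show ?thesis
    by simp
qed

lemma AE_coercive_matrix:
  fixes \<Omega> :: "(real^'n::finite) set" and A :: "real^'n \<Rightarrow> complex^'n^'n"
  assumes "open \<Omega>" and A_meas: "\<forall>i j. Linf \<Omega> (\<lambda>x. A x $ i $ j)"
    and A_coerc: "\<forall>\<phi>. L2v \<Omega> \<phi> \<longrightarrow> \<alpha> * (\<integral>x. (norm (\<phi> x))\<^sup>2 \<partial>lebesgue_on \<Omega>)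
      \<le> Re (\<integral>x. cdot (A x *v \<phi> x) (\<phi> x) \<partial>lebesgue_on \<Omega>)"
  shows "AE x in lebesgue_on \<Omega>. coercive_matrix \<alpha> (A x)"
proof -
  obtain D :: "(complex^'n) set" where D: "countable D" "\<And>U. open U \<Longrightarrow> U \<noteq> {} \<Longrightarrow> \<exists>y\<in>D. y \<in> U"
    using countable_dense_exists by blast
  have "AE x in lebesgue_on \<Omega>. \<forall>v\<in>D. \<alpha> * (norm v)\<^sup>2 \<le> Re (cdot (A x *v v) v)"
    using D(1) AE_coercive_quadratic_form[OF assms] by (subst AE_ball_countable) auto
  then show ?thesis
  proof eventually_elim
    case (elim x)
    \<comment> \<open>the set of directions violating coercivity at \<open>x\<close> is open, hence empty since it misses \<open>D\<close>\<close>
    have "open {w. Re (cdot (A x *v w) w) < \<alpha> * (norm w)\<^sup>2}"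
      unfolding cdot_def by (intro open_Collect_less continuous_intros)
    then have "{w. Re (cdot (A x *v w) w) < \<alpha> * (norm w)\<^sup>2} = {}"
      using D(2) elim by force
    then show ?case
      unfolding coercive_matrix_def by (auto simp: not_less[symmetric])
  qed
qed

lemma borel_measurable_det:
  assumes "\<And>i j. (\<lambda>x. F x $ i $ j) \<in> borel_measurable M"
  shows "(\<lambda>x. det (F x) :: complex) \<in> borel_measurable M"
  unfolding det_def
  by (intro borel_measurable_sum borel_measurable_times borel_measurable_prod assms borel_measurable_const)

lemma borel_measurable_lebesgue_on_AE_eq:
  fixes f g :: "'a::euclidean_space \<Rightarrow> 'b::euclidean_space"
  assumes \<Omega>: "\<Omega> \<in> sets lebesgue" and g: "g \<in> borel_measurable (lebesgue_on \<Omega>)"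
    and "AE x in lebesgue_on \<Omega>. f x = g x"
  shows "f \<in> borel_measurable (lebesgue_on \<Omega>)"
proof -
  obtain N where N: "{x \<in> space (lebesgue_on \<Omega>). f x \<noteq> g x} \<subseteq> N"
      "emeasure (lebesgue_on \<Omega>) N = 0" "N \<in> sets (lebesgue_on \<Omega>)"
    using assms(3) by (rule AE_E) simp
  have "N \<subseteq> \<Omega>" "N \<in> sets lebesgue"
    using N(3) \<Omega> by (simp_all add: sets_restrict_space_iff)
  moreover have "emeasure lebesgue N = 0"
    using N(2) emeasure_restrict_space[of \<Omega> lebesgue N] \<Omega> \<open>N \<subseteq> \<Omega>\<close> by simp
  ultimately have "negligible N"
    by (simp add: negligible_iff_null_sets null_sets_def)
  moreover have "g measurable_on \<Omega>"
    using g measurable_on_iff_borel_measurable[OF \<Omega>] by blast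
  ultimately have "f measurable_on \<Omega>"
    using N(1) by (intro measurable_on_spike[of g \<Omega> N f]) auto
  then show ?thesis
    using measurable_on_iff_borel_measurable[OF \<Omega>] by blast
qed

lemma square_integrable_matrix_inv_vec_nth:
  fixes A :: "'m::euclidean_space \<Rightarrow> complex^'n::finite^'n" and R :: "'m \<Rightarrow> complex^'n"
  assumes \<Omega>: "\<Omega> \<in> sets lebesgue" and "0 < \<alpha>"
    and coerc: "AE x in lebesgue_on \<Omega>. coercive_matrix \<alpha> (A x)"
    and A: "\<And>i j. (\<lambda>x. A x $ i $ j) \<in> borel_measurable (lebesgue_on \<Omega>)"
    and R: "\<And>i. square_integrable (lebesgue_on \<Omega>) (\<lambda>x. R x $ i)"
  shows "square_integrable (lebesgue_on \<Omega>) (\<lambda>x. (matrix_inv (A x) *v R x) $ k)"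
proof -
  let ?M = "lebesgue_on \<Omega>"
  \<comment> \<open>\<open>matrix_inv\<close> is defined by choice; Cramer's rule provides a measurable version\<close>
  define Y where "Y x = det (\<chi> i j. if j = k then R x $ i else A x $ i $ j) / det (A x)" for x
  have "(\<lambda>x. det (\<chi> i j. if j = k then R x $ i else A x $ i $ j)) \<in> borel_measurable ?M"
  proof (rule borel_measurable_det)
    show "(\<lambda>x. (\<chi> i j. if j = k then R x $ i else A x $ i $ j) $ i $ j) \<in> borel_measurable ?M" for i j
      using A R by (cases "j = k") (simp_all add: square_integrable_def)
  qed
  then have "Y \<in> borel_measurable ?M"
    unfolding Y_def by (rule borel_measurable_divide[OF _ borel_measurable_det[OF A]])
  moreover have Y: "AE x in ?M. (matrix_inv (A x) *v R x) $ k = Y x"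
    using coerc by eventually_elim
      (simp add: Y_def matrix_inv_vec_nth_cramer coercive_matrix_det_nonzero[OF _ \<open>0 < \<alpha>\<close>])
  ultimately have meas: "(\<lambda>x. (matrix_inv (A x) *v R x) $ k) \<in> borel_measurable ?M"
    by (rule borel_measurable_lebesgue_on_AE_eq[OF \<Omega>])
  have "integrable ?M (\<lambda>x. (norm (R x))\<^sup>2 / \<alpha>\<^sup>2)"
    using R by (simp add: norm_vec_power2 square_integrable_def)
  then have "integrable ?M (\<lambda>x. (cmod ((matrix_inv (A x) *v R x) $ k))\<^sup>2)"
  proof (rule Bochner_Integration.integrable_bound)
    show "AE x in ?M. norm ((cmod ((matrix_inv (A x) *v R x) $ k))\<^sup>2) \<le> norm ((norm (R x))\<^sup>2 / \<alpha>\<^sup>2)"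
      using coerc
    proof eventually_elim
      case (elim x)
      have "(cmod ((matrix_inv (A x) *v R x) $ k))\<^sup>2 \<le> (norm (matrix_inv (A x) *v R x))\<^sup>2"
        by (simp add: power_mono Finite_Cartesian_Product.norm_nth_le)
      also have "\<dots> \<le> (norm (R x))\<^sup>2 / \<alpha>\<^sup>2"
        by (rule coercive_matrix_inv_norm_le[OF elim \<open>0 < \<alpha>\<close>])
      finally show ?case
        by simp
    qed
  qed (use meas in simp)
  with meas show ?thesis
    by (simp add: square_integrable_def)
qed

lemma integrable_quadratic_form_matrix_inv:
  fixes A :: "'m::euclidean_space \<Rightarrow> complex^'n::finite^'n" and R :: "'m \<Rightarrow> complex^'n"
  assumes "\<Omega> \<in> sets lebesgue" "0 < \<alpha>" "AE x in lebesgue_on \<Omega>. coercive_matrix \<alpha> (A x)"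
    "\<And>i j. (\<lambda>x. A x $ i $ j) \<in> borel_measurable (lebesgue_on \<Omega>)"
    and R: "\<And>i. square_integrable (lebesgue_on \<Omega>) (\<lambda>x. R x $ i)"
  shows "integrable (lebesgue_on \<Omega>) (\<lambda>x. cdot (matrix_inv (A x) *v R x) (R x))"
  unfolding cdot_def
  by (intro Bochner_Integration.integrable_sum integrable_mult_of_square_integrable square_integrable_cnj
      square_integrable_matrix_inv_vec_nth[OF assms] R)

section \<open>The error estimate\<close>

lemma residual_pointwise_bound:
  fixes A :: "complex^'n::finite^'n" and c :: real
  assumes "0 < c" "coercive_matrix \<alpha> A" "0 < \<alpha>" "hermitian_matrix A"
    and flux: "p = A *v gu" and equation: "- dp + cdot gu bv + complex_of_real c * u = f"
  shows "4 * Re ((cdot (gu - gut) bv + (d\<phi> - dp)) * cnj (u - ut)) + 4 * Re (cdot (\<phi> - p) (gu - gut))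
    \<le> inverse c * (cmod (f - complex_of_real c * ut - cdot gut bv + d\<phi>))\<^sup>2
      + Re (cdot (matrix_inv A *v (\<phi> - A *v gut)) (\<phi> - A *v gut))"
proof -
  have R1: "f - complex_of_real c * ut - cdot gut bv + d\<phi>
      = complex_of_real c * (u - ut) + (cdot (gu - gut) bv + (d\<phi> - dp))"
    using equation by (auto simp: cdot_diff_left algebra_simps)
  have R2: "\<phi> - A *v gut = (\<phi> - p) + A *v (gu - gut)"
    by (simp add: flux matrix_vector_mult_diff_distrib)
  show ?thesis
    unfolding R1 R2
    by (rule add_mono[OF Re_mult_cnj_le_inverse_norm_power2[OF assms(1)]
          Re_cdot_le_quadratic_form_inverse[OF assms(2-4)]])
qed

lemma H10_square_integrable:
  "H10 \<Omega> u \<Longrightarrow> square_integrable (lebesgue_on \<Omega>) u"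
  by (simp add: H10_def H1_def L2_iff_square_integrable)

lemma H10_square_integrable_wgrad:
  "H10 \<Omega> u \<Longrightarrow> square_integrable (lebesgue_on \<Omega>) (\<lambda>x. wgrad \<Omega> u x $ i)"
  by (simp add: H10_def square_integrable_wgrad)

lemma L2v_square_integrable_nth:
  assumes "L2v \<Omega> q"
  shows "square_integrable (lebesgue_on \<Omega>) (\<lambda>x. q x $ i)"
  unfolding square_integrable_def
proof
  show meas: "(\<lambda>x. q x $ i) \<in> borel_measurable (lebesgue_on \<Omega>)"
    using assms unfolding L2v_def
    by (intro borel_measurable_continuous_on[where f = "\<lambda>v. v $ i"] linear_continuous_on
        bounded_linear_vec_nth) auto
  show "integrable (lebesgue_on \<Omega>) (\<lambda>x. (cmod (q x $ i))\<^sup>2)"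
  proof (rule Bochner_Integration.integrable_bound)
    show "integrable (lebesgue_on \<Omega>) (\<lambda>x. (norm (q x))\<^sup>2)"
      using assms by (simp add: L2v_def)
  qed (use meas in \<open>simp_all add: power_mono Finite_Cartesian_Product.norm_nth_le\<close>)
qed

lemma Hdiv_square_integrable_nth: "Hdiv \<Omega> q \<Longrightarrow> square_integrable (lebesgue_on \<Omega>) (\<lambda>x. q x $ i)"
  by (simp add: Hdiv_def L2v_square_integrable_nth)

lemma Hdiv_wdiv:
  assumes "Hdiv \<Omega> q"
  shows "square_integrable (lebesgue_on \<Omega>) (wdiv \<Omega> q)" "weak_div \<Omega> q (wdiv \<Omega> q)"
proof -
  have "L2 \<Omega> (wdiv \<Omega> q) \<and> weak_div \<Omega> q (wdiv \<Omega> q)"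
    using assms unfolding Hdiv_def wdiv_def by (metis (mono_tags, lifting) someI_ex)
  then show "square_integrable (lebesgue_on \<Omega>) (wdiv \<Omega> q)" "weak_div \<Omega> q (wdiv \<Omega> q)"
    by (simp_all add: L2_iff_square_integrable)
qed

lemma cdot_cvec: "cdot v (cvec w) = (\<Sum>i\<in>UNIV. complex_of_real (w $ i) * v $ i)"
  by (simp add: cdot_def cvec_def mult.commute)

lemma square_integrable_cdot_cvec:
  assumes "Linf \<Omega> b" "\<And>i. square_integrable (lebesgue_on \<Omega>) (\<lambda>x. v x $ i)"
  shows "square_integrable (lebesgue_on \<Omega>) (\<lambda>x. cdot (v x) (cvec (b x)))"
  unfolding cdot_cvec using assms
  by (intro square_integrable_sum Linf_square_integrable_mult Linf_complex_of_real Linf_vec_nth) auto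

lemma H10_diff_H1_approximation:
  assumes "open \<Omega>" "H10 \<Omega> u" "H10 \<Omega> v"
  shows "\<exists>a b. H1_approximation \<Omega> a b (\<lambda>x. u x - v x) (\<lambda>i x. wgrad \<Omega> u x $ i - wgrad \<Omega> v x $ i)"
proof -
  obtain a b a' b' where "H1_approximation \<Omega> a b u (\<lambda>i x. wgrad \<Omega> u x $ i)"
    "H1_approximation \<Omega> a' b' v (\<lambda>i x. wgrad \<Omega> v x $ i)"
    using H10_imp_H1_approximation assms(2,3) by metis
  from H1_approximation_diff[OF assms(1) this H10_square_integrable[OF assms(2)]
      H10_square_integrable[OF assms(3)] H10_square_integrable_wgrad[OF assms(2)]
      H10_square_integrable_wgrad[OF assms(3)]]
  show ?thesis
    by blast
qed

definition error_density :: "(real^'n::finite) set \<Rightarrow> (real^'n \<Rightarrow> real^'n) \<Rightarrow> (real^'n \<Rightarrow> complex)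
    \<Rightarrow> (real^'n \<Rightarrow> complex) \<Rightarrow> (real^'n \<Rightarrow> complex^'n) \<Rightarrow> (real^'n \<Rightarrow> complex^'n) \<Rightarrow> real^'n \<Rightarrow> complex" where
  "error_density \<Omega> b u ut p \<phi> x =
     (cdot (wgrad \<Omega> u x - wgrad \<Omega> ut x) (cvec (b x)) + (wdiv \<Omega> \<phi> x - wdiv \<Omega> p x)) * cnj (u x - ut x)
     + cdot (\<phi> x - p x) (wgrad \<Omega> u x - wgrad \<Omega> ut x)"

lemma integral_error_density:
  assumes "open \<Omega>" "H10 \<Omega> u" "H10 \<Omega> ut" "Hdiv \<Omega> p" "Hdiv \<Omega> \<phi>" "Linf \<Omega> b" "Linf \<Omega> divb"
    "weak_div \<Omega> (\<lambda>x. cvec (b x)) (\<lambda>x. complex_of_real (divb x))"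
  shows "integrable (lebesgue_on \<Omega>) (error_density \<Omega> b u ut p \<phi>)"
    and "wnorm2 \<Omega> (\<lambda>x. - divb x) (\<lambda>x. u x - ut x)
      = 2 * Re (\<integral>x. error_density \<Omega> b u ut p \<phi> x \<partial>lebesgue_on \<Omega>)"
proof -
  let ?M = "lebesgue_on \<Omega>"
  define e where "e x = u x - ut x" for x
  define G where "G i x = wgrad \<Omega> u x $ i - wgrad \<Omega> ut x $ i" for i x
  obtain a b' where approx: "H1_approximation \<Omega> a b' e G"
    unfolding e_def[abs_def] G_def[abs_def] using H10_diff_H1_approximation[OF assms(1-3)] by blast
  have e: "square_integrable ?M e"
    unfolding e_def using assms(2,3) by (intro square_integrable_diff H10_square_integrable)
  have G: "square_integrable ?M (G i)" for i
    unfolding G_def using assms(2,3) by (intro square_integrable_diff H10_square_integrable_wgrad)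
  note q = Hdiv_square_integrable_nth[OF assms(4)] Hdiv_square_integrable_nth[OF assms(5)]
    Hdiv_wdiv[OF assms(4)] Hdiv_wdiv[OF assms(5)]
  let ?bG = "\<lambda>x. \<Sum>i\<in>UNIV. complex_of_real (b x $ i) * G i x"
  have bG: "square_integrable ?M ?bG"
    using assms(6) G by (intro square_integrable_sum Linf_square_integrable_mult Linf_complex_of_real
        Linf_vec_nth) auto
  have "cdot (wgrad \<Omega> u x - wgrad \<Omega> ut x) (cvec (b x)) = ?bG x" for x
    by (simp add: cdot_cvec G_def)
  moreover have "cdot (\<phi> x - p x) (wgrad \<Omega> u x - wgrad \<Omega> ut x)
      = (\<Sum>i\<in>UNIV. \<phi> x $ i * cnj (G i x)) - (\<Sum>i\<in>UNIV. p x $ i * cnj (G i x))" for x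
    by (simp add: cdot_def G_def left_diff_distrib sum_subtractf)
  ultimately have density: "error_density \<Omega> b u ut p \<phi> x = ?bG x * cnj (e x) + wdiv \<Omega> \<phi> x * cnj (e x)
      - wdiv \<Omega> p x * cnj (e x) + (\<Sum>i\<in>UNIV. \<phi> x $ i * cnj (G i x)) - (\<Sum>i\<in>UNIV. p x $ i * cnj (G i x))" for x
    by (simp add: error_density_def e_def algebra_simps)
  have "integrable ?M (\<lambda>x. ?bG x * cnj (e x))" "integrable ?M (\<lambda>x. wdiv \<Omega> \<phi> x * cnj (e x))"
    "integrable ?M (\<lambda>x. wdiv \<Omega> p x * cnj (e x))" "integrable ?M (\<lambda>x. \<phi> x $ i * cnj (G i x))"
    "integrable ?M (\<lambda>x. p x $ i * cnj (G i x))" for i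
    using bG q e G by (auto intro!: integrable_mult_of_square_integrable square_integrable_cnj)
  then have int: "integrable ?M (error_density \<Omega> b u ut p \<phi>)"
    and split: "(\<integral>x. error_density \<Omega> b u ut p \<phi> x \<partial>?M) = (\<integral>x. ?bG x * cnj (e x) \<partial>?M)
      + (\<integral>x. wdiv \<Omega> \<phi> x * cnj (e x) \<partial>?M) - (\<integral>x. wdiv \<Omega> p x * cnj (e x) \<partial>?M)
      + (\<Sum>i\<in>UNIV. \<integral>x. \<phi> x $ i * cnj (G i x) \<partial>?M) - (\<Sum>i\<in>UNIV. \<integral>x. p x $ i * cnj (G i x) \<partial>?M)"
    unfolding density by (simp_all add: integral_sum)
  then show "integrable ?M (error_density \<Omega> b u ut p \<phi>)"
    by blast
  have "wnorm2 \<Omega> (\<lambda>x. - divb x) e = 2 * Re (\<integral>x. ?bG x * cnj (e x) \<partial>?M)"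
    by (rule convection_energy_identity[OF assms(1) approx e G assms(6-8)])
  moreover have "(\<integral>x. wdiv \<Omega> \<phi> x * cnj (e x) \<partial>?M) = - (\<Sum>i\<in>UNIV. \<integral>x. \<phi> x $ i * cnj (G i x) \<partial>?M)"
    by (rule integral_weak_div_H1_approximation[OF assms(1) approx e G q(2,5,6)])
  moreover have "(\<integral>x. wdiv \<Omega> p x * cnj (e x) \<partial>?M) = - (\<Sum>i\<in>UNIV. \<integral>x. p x $ i * cnj (G i x) \<partial>?M)"
    by (rule integral_weak_div_H1_approximation[OF assms(1) approx e G q(1,3,4)])
  ultimately show "wnorm2 \<Omega> (\<lambda>x. - divb x) (\<lambda>x. u x - ut x)
      = 2 * Re (\<integral>x. error_density \<Omega> b u ut p \<phi> x \<partial>?M)"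
    unfolding e_def[abs_def, symmetric] split by simp
qed

lemma integrable_inverse_mult_norm_power2:
  assumes "c \<in> borel_measurable M" "0 < c0" "AE x in M. c0 \<le> c x" "square_integrable M R"
  shows "integrable M (\<lambda>x. inverse (c x) * (cmod (R x))\<^sup>2)"
proof (rule Bochner_Integration.integrable_bound)
  show "integrable M (\<lambda>x. inverse c0 * (cmod (R x))\<^sup>2)"
    using assms(4) by (simp add: square_integrable_def)
  show "AE x in M. norm (inverse (c x) * (cmod (R x))\<^sup>2) \<le> norm (inverse c0 * (cmod (R x))\<^sup>2)"
    using assms(3) by eventually_elim (use assms(2) in \<open>simp add: abs_mult le_imp_inverse_le mult_right_mono\<close>)
  have "(\<lambda>x. cmod (R x)) \<in> borel_measurable M"
    using assms(4) by (simp add: square_integrable_def measurable_compose[OF _ borel_measurable_norm])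
  then show "(\<lambda>x. inverse (c x) * (cmod (R x))\<^sup>2) \<in> borel_measurable M"
    using assms(1) by (intro borel_measurable_times borel_measurable_inverse borel_measurable_power)
qed

lemma square_integrable_matrix_mult_vec_nth:
  assumes "\<forall>i j. Linf \<Omega> (\<lambda>x. A x $ i $ j)" "\<And>j. square_integrable (lebesgue_on \<Omega>) (\<lambda>x. v x $ j)"
  shows "square_integrable (lebesgue_on \<Omega>) (\<lambda>x. (A x *v v x) $ i)"
  unfolding matrix_vector_mult_def vec_lambda_beta using assms
  by (intro square_integrable_sum Linf_square_integrable_mult) auto

lemma AE_error_density_le_residuals:
  fixes A :: "real^'n::finite \<Rightarrow> complex^'n^'n"
  assumes "0 < c0" "AE x in lebesgue_on \<Omega>. c0 \<le> c x"
    and "0 < \<alpha>" "AE x in lebesgue_on \<Omega>. coercive_matrix \<alpha> (A x)"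
    and A_herm: "AE x in lebesgue_on \<Omega>. \<forall>i j. A x $ i $ j = cnj (A x $ j $ i)"
    and sol: "solves_P1 \<Omega> A b c f u p"
  shows "AE x in lebesgue_on \<Omega>. 4 * Re (error_density \<Omega> b u ut p \<phi> x)
    \<le> inverse (c x) * (cmod (f x - complex_of_real (c x) * ut x - cdot (wgrad \<Omega> ut x) (cvec (b x))
          + wdiv \<Omega> \<phi> x))\<^sup>2
      + Re (cdot (matrix_inv (A x) *v (\<phi> x - A x *v wgrad \<Omega> ut x)) (\<phi> x - A x *v wgrad \<Omega> ut x))"
proof -
  have flux: "AE x in lebesgue_on \<Omega>. p x = A x *v wgrad \<Omega> u x"
    and equation: "AE x in lebesgue_on \<Omega>.
      - wdiv \<Omega> p x + cdot (wgrad \<Omega> u x) (cvec (b x)) + complex_of_real (c x) * u x = f x"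
    using sol by (simp_all add: solves_P1_def)
  show ?thesis
    using assms(2,4) A_herm flux equation
  proof eventually_elim
    case (elim x)
    have "0 < c x"
      using elim(1) \<open>0 < c0\<close> by linarith
    moreover have "hermitian_matrix (A x)"
      using elim(3) unfolding hermitian_matrix_def .
    ultimately show ?case
      using residual_pointwise_bound[OF _ elim(2) \<open>0 < \<alpha>\<close> _ elim(4,5)]
      by (simp add: error_density_def)
  qed
qed

lemma error_density_le_residuals:
  fixes \<Omega> :: "(real^'n::finite) set" and A :: "real^'n \<Rightarrow> complex^'n^'n"
  assumes "open \<Omega>" and A_meas: "\<forall>i j. Linf \<Omega> (\<lambda>x. A x $ i $ j)"
    and A_herm: "AE x in lebesgue_on \<Omega>. \<forall>i j. A x $ i $ j = cnj (A x $ j $ i)"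
    and "0 < \<alpha>" and A_coerc: "\<forall>\<phi>. L2v \<Omega> \<phi> \<longrightarrow> \<alpha> * (\<integral>x. (norm (\<phi> x))\<^sup>2 \<partial>lebesgue_on \<Omega>)
      \<le> Re (\<integral>x. cdot (A x *v \<phi> x) (\<phi> x) \<partial>lebesgue_on \<Omega>)"
    and b: "Linf \<Omega> b" and c: "Linf \<Omega> c" and f: "L2 \<Omega> f"
    and "0 < c0" and c_ge: "AE x in lebesgue_on \<Omega>. c0 \<le> c x"
    and sol: "solves_P1 \<Omega> A b c f u p" and ut: "H10 \<Omega> ut" and \<phi>: "Hdiv \<Omega> \<phi>"
    and int: "integrable (lebesgue_on \<Omega>) (error_density \<Omega> b u ut p \<phi>)"
  defines "R1 \<equiv> \<lambda>x. f x - complex_of_real (c x) * ut x - cdot (wgrad \<Omega> ut x) (cvec (b x)) + wdiv \<Omega> \<phi> x"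
    and "R2 \<equiv> \<lambda>x. \<phi> x - A x *v wgrad \<Omega> ut x"
  shows "4 * Re (\<integral>x. error_density \<Omega> b u ut p \<phi> x \<partial>lebesgue_on \<Omega>)
    \<le> wnorm2 \<Omega> (\<lambda>x. inverse (c x)) R1 + wnorm2M \<Omega> (\<lambda>x. matrix_inv (A x)) R2"
proof -
  let ?M = "lebesgue_on \<Omega>" and ?Q = "\<lambda>x. cdot (matrix_inv (A x) *v R2 x) (R2 x)"
  have "square_integrable ?M R1"
    unfolding R1_def
    using f c b H10_square_integrable[OF ut] H10_square_integrable_wgrad[OF ut] Hdiv_wdiv[OF \<phi>]
    by (intro square_integrable_add square_integrable_diff Linf_square_integrable_mult
        Linf_complex_of_real square_integrable_cdot_cvec) (auto simp: L2_iff_square_integrable)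
  then have R1: "integrable ?M (\<lambda>x. inverse (c x) * (cmod (R1 x))\<^sup>2)"
    using c c_ge \<open>0 < c0\<close> by (intro integrable_inverse_mult_norm_power2) (auto simp: Linf_def)
  have coerc: "AE x in ?M. coercive_matrix \<alpha> (A x)"
    by (rule AE_coercive_matrix[OF assms(1) A_meas A_coerc])
  have "square_integrable ?M (\<lambda>x. R2 x $ i)" for i
    unfolding R2_def
    using Hdiv_square_integrable_nth[OF \<phi>]
      square_integrable_matrix_mult_vec_nth[OF A_meas H10_square_integrable_wgrad[OF ut]]
    by (simp add: square_integrable_diff)
  then have Q: "integrable ?M ?Q"
    using A_meas unfolding Linf_def
    by (intro integrable_quadratic_form_matrix_inv[OF sets_lebesgue_open[OF assms(1)] \<open>0 < \<alpha>\<close> coerc]) auto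
  have "(\<integral>x. 4 * Re (error_density \<Omega> b u ut p \<phi> x) \<partial>?M)
      \<le> (\<integral>x. inverse (c x) * (cmod (R1 x))\<^sup>2 + Re (?Q x) \<partial>?M)"
    using int R1 Q AE_error_density_le_residuals[OF \<open>0 < c0\<close> c_ge \<open>0 < \<alpha>\<close> coerc A_herm sol]
    unfolding R1_def R2_def by (intro integral_mono_AE) auto
  then show ?thesis
    using int R1 Q by (simp add: wnorm2_def wnorm2M_def)
qed

theorem mainTheorem14:
  fixes \<Omega> :: "(real^'n::finite) set"
    and A :: "real^'n \<Rightarrow> complex^'n^'n"
    and b :: "real^'n \<Rightarrow> real^'n"
    and divb :: "real^'n \<Rightarrow> real"
    and c :: "real^'n \<Rightarrow> real"
    and f u ut :: "real^'n \<Rightarrow> complex"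
    and p :: "real^'n \<Rightarrow> complex^'n"
    and \<alpha> \<beta> c0 b0 :: real
  assumes "open \<Omega>"
    and A_meas: "\<forall>i j. Linf \<Omega> (\<lambda>x. A x $ i $ j)"
    and A_herm: "AE x in lebesgue_on \<Omega>. \<forall>i j. A x $ i $ j = cnj (A x $ j $ i)"
    and "0 < \<alpha>" and "\<alpha> \<le> \<beta>"
    and A_coerc: "\<forall>\<phi>. L2v \<Omega> \<phi> \<longrightarrow>
          \<alpha> * (\<integral>x. (norm (\<phi> x))\<^sup>2 \<partial>lebesgue_on \<Omega>)
            \<le> Re (\<integral>x. cdot (A x *v \<phi> x) (\<phi> x) \<partial>lebesgue_on \<Omega>)
          \<and> Re (\<integral>x. cdot (A x *v \<phi> x) (\<phi> x) \<partial>lebesgue_on \<Omega>)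
            \<le> \<beta> * (\<integral>x. (norm (\<phi> x))\<^sup>2 \<partial>lebesgue_on \<Omega>)"
    and b_Linf: "Linf \<Omega> b"
    and divb_Linf: "Linf \<Omega> divb"
    and divb_div: "weak_div \<Omega> (\<lambda>x. cvec (b x)) (\<lambda>x. complex_of_real (divb x))"
    and c_Linf: "Linf \<Omega> c"
    and f_L2: "L2 \<Omega> f"
    and "0 < c0" and c_ge: "AE x in lebesgue_on \<Omega>. c0 \<le> c x"
    and "0 < b0" and divb_le: "AE x in lebesgue_on \<Omega>. b0 \<le> - divb x"
    and sol: "solves_P1 \<Omega> A b c f u p"
    and ut: "H10 \<Omega> ut"
  shows "\<forall>\<phi>. Hdiv \<Omega> \<phi> \<longrightarrow>
     wnorm2 \<Omega> (\<lambda>x. - divb x) (\<lambda>x. u x - ut x)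
       \<le> 1/2 * (wnorm2 \<Omega> (\<lambda>x. inverse (c x))
                   (\<lambda>x. f x - complex_of_real (c x) * ut x - cdot (wgrad \<Omega> ut x) (cvec (b x))
                        + wdiv \<Omega> \<phi> x)
               + wnorm2M \<Omega> (\<lambda>x. matrix_inv (A x)) (\<lambda>x. \<phi> x - A x *v wgrad \<Omega> ut x))"
proof (intro allI impI)
  fix \<phi> assume \<phi>: "Hdiv \<Omega> \<phi>"
  have u: "H10 \<Omega> u" and p: "Hdiv \<Omega> p"
    using sol by (simp_all add: solves_P1_def)
  have A_coerc': "\<forall>\<phi>. L2v \<Omega> \<phi> \<longrightarrow> \<alpha> * (\<integral>x. (norm (\<phi> x))\<^sup>2 \<partial>lebesgue_on \<Omega>)
      \<le> Re (\<integral>x. cdot (A x *v \<phi> x) (\<phi> x) \<partial>lebesgue_on \<Omega>)"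
    using A_coerc by blast
  note identity = integral_error_density[OF \<open>open \<Omega>\<close> u ut p \<phi> b_Linf divb_Linf divb_div]
  have "4 * Re (\<integral>x. error_density \<Omega> b u ut p \<phi> x \<partial>lebesgue_on \<Omega>)
      \<le> wnorm2 \<Omega> (\<lambda>x. inverse (c x))
           (\<lambda>x. f x - complex_of_real (c x) * ut x - cdot (wgrad \<Omega> ut x) (cvec (b x)) + wdiv \<Omega> \<phi> x)
        + wnorm2M \<Omega> (\<lambda>x. matrix_inv (A x)) (\<lambda>x. \<phi> x - A x *v wgrad \<Omega> ut x)"
    by (rule error_density_le_residuals[OF \<open>open \<Omega>\<close> A_meas A_herm \<open>0 < \<alpha>\<close> A_coerc' b_Linf c_Linf f_L2
          \<open>0 < c0\<close> c_ge sol ut \<phi> identity(1)])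
  then show "wnorm2 \<Omega> (\<lambda>x. - divb x) (\<lambda>x. u x - ut x)
       \<le> 1/2 * (wnorm2 \<Omega> (\<lambda>x. inverse (c x))
                   (\<lambda>x. f x - complex_of_real (c x) * ut x - cdot (wgrad \<Omega> ut x) (cvec (b x))
                        + wdiv \<Omega> \<phi> x)
               + wnorm2M \<Omega> (\<lambda>x. matrix_inv (A x)) (\<lambda>x. \<phi> x - A x *v wgrad \<Omega> ut x))"
    using identity(2) by (simp add: field_simps)
qed

end
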